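(* For integers $n\ge 1$ and $k\ge 1$, let $a_{n,k}(213)$ denote the number of cyclic permutations $\pi\in\mathfrak S_n$ whose one-line notation avoids $\delta_k=k(k-1)\cdots 21$ and whose cycle form $C(\pi)$ avoids $213$. Then for $n\geq 2$ and $k\geq 4$, \[a_{n,k}(213) = \sum_{i=1}^{n-1} a_{i,k}(213)\,a_{n-i,k-1}(213),\] with base cases: $a_{1,1}(213)=0$ and $a_{1,k}(213) = 1$ for $k \geq 2$; $a_{n,1}(213) = a_{n,2}(213) = 0$ for $n \geq 2$; and $a_{n,3}(213) = 2^{n-2}$ for $n \geq 2$.
   Context: A permutation $\pi\in\mathfrak S_n$ is cyclic if it consists of a single $n$-cycle. For a cyclic $\pi$, its cycle form is $C(\pi)=(1,c_2,\dots,c_n)$ with $c_2=\pi(1)$ and $c_{i+1}=\pi(c_i)$; it is regarded as the sequence $1c_2\cdots c_n$ for pattern purposes. A sequence of distinct integers avoids a pattern $\sigma\in\mathfrak S_m$ if it has no subsequence of length $m$ in the same relative order as $\sigma$. The one-line notation of $\pi$ is $\pi_1\pi_2\cdots\pi_n$ with $\pi_i=\pi(i)$. *)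

theory Defs
  imports "HOL-Combinatorics.Permutations"
begin

(* Permutations of [n] = {1..n} are functions nat => nat with  p permutes {1..n}. *)

definition one_line :: "nat \<Rightarrow> (nat \<Rightarrow> nat) \<Rightarrow> nat list" where
  "one_line n p = map p [1..<Suc n]"

definition cycle_form :: "nat \<Rightarrow> (nat \<Rightarrow> nat) \<Rightarrow> nat list" where
  "cycle_form n p = map (\<lambda>i. (p ^^ i) 1) [0..<n]"

definition cyclic_perm :: "nat \<Rightarrow> (nat \<Rightarrow> nat) \<Rightarrow> bool" where
  "cyclic_perm n p \<longleftrightarrow> p permutes {1..n} \<and> set (cycle_form n p) = {1..n}"

definition contains_pattern :: "nat list \<Rightarrow> nat list \<Rightarrow> bool" where
  "contains_pattern xs \<sigma> \<longleftrightarrow>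
     (\<exists>idx :: nat \<Rightarrow> nat.
        (\<forall>a b. a < b \<and> b < length \<sigma> \<longrightarrow> idx a < idx b) \<and>
        (\<forall>a < length \<sigma>. idx a < length xs) \<and>
        (\<forall>a < length \<sigma>. \<forall>b < length \<sigma>.
            (xs ! idx a < xs ! idx b) \<longleftrightarrow> (\<sigma> ! a < \<sigma> ! b)))"

definition avoids :: "nat list \<Rightarrow> nat list \<Rightarrow> bool" where
  "avoids xs \<sigma> \<longleftrightarrow> \<not> contains_pattern xs \<sigma>"

definition delta :: "nat \<Rightarrow> nat list" where
  "delta k = rev [1..<Suc k]"

definition a213 :: "nat \<Rightarrow> nat \<Rightarrow> nat" where
  "a213 n k = card {p. cyclic_perm n p \<and> avoids (one_line n p) (delta k)
                        \<and> avoids (cycle_form n p) [2,1,3]}"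

end

theory Submission
  imports Defs "HOL-Library.Sublist" "HOL-Combinatorics.Cycles"
begin

text \<open>
  A 213-avoiding cycle form of length \<open>n \<ge> 2\<close> reads \<open>1, m + 1, H, L\<close>, where the values of \<open>H\<close>
  exceed \<open>m + 1\<close> and those of \<open>L\<close> lie below it. It is therefore the join of the 213-avoiding
  cycle forms \<open>A = 1, H - m\<close> of length \<open>n - m\<close> and \<open>B = 1, L\<close> of length \<open>m\<close>, and joining is
  a bijection. The one-line notation of the join is \<open>m + 1\<close>, then the one-line notation of \<open>B\<close>
  without its first entry, then that of \<open>A\<close> shifted up by \<open>m\<close>, except that \<open>1\<close> becomes the first
  entry of \<open>B\<close>'s one-line notation. Consequently the longest decreasing subsequence of the
  one-line notation (\<open>lds_one_line\<close>) and of its rotation (\<open>lds_rotated\<close>) satisfy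
  \<open>lds_one_line (join) = max (lds_one_line A) (1 + lds_rotated B)\<close> and
  \<open>lds_rotated (join) = max (lds_one_line_2 A) (lds_rotated B)\<close>, where \<open>lds_one_line_2 A\<close> is
  \<open>lds_one_line A + 1\<close> except for \<open>A = [1, 2, ..., n]\<close>. Counting cycle forms by these statistics
  gives two product recurrences which coincide for bounds \<open>k \<ge> 3\<close>; so the two counts agree, and the
  first recurrence becomes the claimed one. For \<open>k = 3\<close> it collapses to
  \<open>a\<^sub>n\<^sub>,\<^sub>3 = a\<^sub>1\<^sub>,\<^sub>3 + \<dots> + a\<^sub>n\<^sub>-\<^sub>1\<^sub>,\<^sub>3\<close>.
\<close>

section \<open>Longest decreasing subsequences\<close>

lemma subseq_set_subset: "subseq ys xs \<Longrightarrow> set ys \<subseteq> set xs"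
  by (induct rule: list_emb.induct) auto

lemma subseq_mapE:
  assumes "subseq zs (map h xs)"
  obtains ws where "subseq ws xs" "zs = map h ws"
proof -
  obtain N where "zs = nths (map h xs) N" using assms by (auto simp: subseq_conv_nths)
  moreover have "subseq (nths xs N) xs" unfolding subseq_conv_nths by blast
  ultimately show ?thesis using that by (simp add: nths_map)
qed

definition lds :: "'a::linorder list \<Rightarrow> nat" where
  "lds xs = Max (length ` {ys. subseq ys xs \<and> sorted_wrt (>) ys})"

lemma finite_decreasing_subseqs: "finite {ys. subseq ys xs \<and> sorted_wrt (>) ys}"
proof -
  have "{ys. subseq ys xs \<and> sorted_wrt (>) ys} \<subseteq> {ys. set ys \<subseteq> set xs \<and> length ys \<le> length xs}"
    by (auto dest: subseq_set_subset list_emb_length)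
  moreover have "finite {ys. set ys \<subseteq> set xs \<and> length ys \<le> length xs}"
    by (rule finite_lists_length_le) simp
  ultimately show ?thesis by (rule finite_subset)
qed

lemma length_le_lds:
  assumes "subseq ys xs" "sorted_wrt (>) ys"
  shows "length ys \<le> lds xs"
proof -
  have "length ys \<in> length ` {ys. subseq ys xs \<and> sorted_wrt (>) ys}"
    using assms by blast
  then show ?thesis unfolding lds_def by (rule Max_ge[OF finite_imageI[OF finite_decreasing_subseqs]])
qed

lemma lds_witness:
  obtains ys where "subseq ys xs" "sorted_wrt (>) ys" "length ys = lds xs"
proof -
  have ne: "{ys. subseq ys xs \<and> sorted_wrt (>) ys} \<noteq> {}"
  proof -
    have "[] \<in> {ys. subseq ys xs \<and> sorted_wrt (>) ys}" by simp
    then show ?thesis by blast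
  qed
  have "lds xs \<in> length ` {ys. subseq ys xs \<and> sorted_wrt (>) ys}" unfolding lds_def
    using ne by (intro Max_in[OF finite_imageI[OF finite_decreasing_subseqs]]) blast
  then show ?thesis using that by auto
qed

lemma lds_le_iff: "lds xs \<le> k \<longleftrightarrow> (\<forall>ys. subseq ys xs \<and> sorted_wrt (>) ys \<longrightarrow> length ys \<le> k)"
proof
  assume "lds xs \<le> k" then show "\<forall>ys. subseq ys xs \<and> sorted_wrt (>) ys \<longrightarrow> length ys \<le> k"
    using length_le_lds le_trans by blast
next
  assume H: "\<forall>ys. subseq ys xs \<and> sorted_wrt (>) ys \<longrightarrow> length ys \<le> k"
  obtain ys where "subseq ys xs" "sorted_wrt (>) ys" "length ys = lds xs" by (rule lds_witness)
  then show "lds xs \<le> k" using H by auto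
qed

lemma lds_ge_iff: "k \<le> lds xs \<longleftrightarrow> (\<exists>ys. subseq ys xs \<and> sorted_wrt (>) ys \<and> k \<le> length ys)"
proof
  assume "k \<le> lds xs"
  moreover obtain ys where "subseq ys xs" "sorted_wrt (>) ys" "length ys = lds xs" by (rule lds_witness)
  ultimately show "\<exists>ys. subseq ys xs \<and> sorted_wrt (>) ys \<and> k \<le> length ys" by auto
next
  assume "\<exists>ys. subseq ys xs \<and> sorted_wrt (>) ys \<and> k \<le> length ys"
  then show "k \<le> lds xs" using length_le_lds le_trans by blast
qed

lemma lds_pos: "xs \<noteq> [] \<Longrightarrow> 1 \<le> lds xs"
  unfolding lds_ge_iff by (rule exI[of _ "[hd xs]"]) (auto simp: subseq_singleton_left)

lemma lds_singleton [simp]: "lds [x] = 1"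
proof -
  have "lds [x] \<le> 1" unfolding lds_le_iff by (auto dest: list_emb_length)
  then show ?thesis using lds_pos[of "[x]"] by simp
qed

lemma lds_mono: "subseq us vs \<Longrightarrow> lds us \<le> lds vs"
proof -
  assume that: "subseq us vs"
  obtain zs where zs: "subseq zs us" "sorted_wrt (>) zs" "length zs = lds us" by (rule lds_witness)
  then have "subseq zs vs" using that subseq_order.order_trans by blast
  then show ?thesis using zs length_le_lds by fastforce
qed

lemma lds_append_filter:
  assumes "\<forall>y\<in>set ys. \<not> P y \<longrightarrow> (\<forall>x\<in>set xs. x < y)"
  shows "lds (xs @ ys) = max (lds ys) (lds (xs @ filter P ys))"
proof (rule antisym)
  show "lds (xs @ ys) \<le> max (lds ys) (lds (xs @ filter P ys))"
    unfolding lds_le_iff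
  proof (intro allI impI)
    fix zs assume zs: "subseq zs (xs @ ys) \<and> sorted_wrt (>) zs"
    then obtain z1 z2 where z: "zs = z1 @ z2" "subseq z1 xs" "subseq z2 ys"
      by (auto elim: subseq_appendE)
    show "length zs \<le> max (lds ys) (lds (xs @ filter P ys))"
    proof (cases "z1 = []")
      case True
      then have "length zs \<le> lds ys" using z zs by (intro length_le_lds) auto
      then show ?thesis by simp
    next
      case False
      have "\<forall>y\<in>set z2. P y"
      proof
        fix y assume y: "y \<in> set z2"
        have "last z1 \<in> set z1" using False by simp
        then have lx: "last z1 \<in> set xs" using z(2) subseq_set_subset by blast
        have "y < last z1" using zs z y False
          by (auto simp: sorted_wrt_append)
        moreover have "y \<in> set ys" using y z(3) subseq_set_subset by blast
        ultimately show "P y" using assms lx by force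
      qed
      then have "z2 = filter P z2" by simp
      then have "subseq z2 (filter P ys)" using z(3) by (metis subseq_filter)
      then have "subseq zs (xs @ filter P ys)" using z by (simp add: list_emb_append_mono)
      then have "length zs \<le> lds (xs @ filter P ys)" using zs by (intro length_le_lds) auto
      then show ?thesis by simp
    qed
  qed
next
  have a: "lds ys \<le> lds (xs @ ys)" by (rule lds_mono) (rule subseq_drop_many, simp)
  have b: "lds (xs @ filter P ys) \<le> lds (xs @ ys)" by (rule lds_mono) (simp add: subseq_append')
  show "max (lds ys) (lds (xs @ filter P ys)) \<le> lds (xs @ ys)" using a b by simp
qed

lemma lds_increasing_pair:
  assumes "x < y"
  shows "lds [x, y] = 1"
proof -
  have "lds ([x] @ [y]) = max (lds [y]) (lds ([x] @ filter (\<lambda>_. False) [y]))"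
    by (rule lds_append_filter) (use assms in simp)
  then show ?thesis by simp
qed

lemma lds_Cons_greater:
  assumes "\<forall>y\<in>set ys. y < x"
  shows "lds (x # ys) = Suc (lds ys)"
proof (rule antisym)
  show "lds (x # ys) \<le> Suc (lds ys)"
    unfolding lds_le_iff
  proof (intro allI impI)
    fix zs assume zs: "subseq zs (x # ys) \<and> sorted_wrt (>) zs"
    show "length zs \<le> Suc (lds ys)"
    proof (cases zs)
      case Nil then show ?thesis by simp
    next
      case (Cons z zs')
      then have "subseq zs' ys" using zs
        by (metis subseq_Cons' list_emb_ConsD subseq_Cons2_iff)
      then show ?thesis using zs Cons length_le_lds[of zs' ys] by simp
    qed
  qed
next
  obtain zs where zs: "subseq zs ys" "sorted_wrt (>) zs" "length zs = lds ys" by (rule lds_witness)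
  have "subseq (x # zs) (x # ys)" using zs by simp
  moreover have "sorted_wrt (>) (x # zs)" using zs assms subseq_set_subset by fastforce
  ultimately show "Suc (lds ys) \<le> lds (x # ys)" using zs length_le_lds by fastforce
qed

lemma lds_snoc_le: "lds (xs @ [x]) \<le> Suc (lds xs)"
  unfolding lds_le_iff
proof (intro allI impI)
  fix zs assume zs: "subseq zs (xs @ [x]) \<and> sorted_wrt (>) zs"
  then obtain z1 z2 where z: "zs = z1 @ z2" "subseq z1 xs" "subseq z2 [x]"
    by (auto elim: subseq_appendE)
  have "length z2 \<le> 1" using z(3) list_emb_length by fastforce
  moreover have "length z1 \<le> lds xs" using z zs by (intro length_le_lds) (auto simp: sorted_wrt_append)
  ultimately show "length zs \<le> Suc (lds xs)" using z by simp
qed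

lemma lds_snoc_less:
  assumes "\<forall>y\<in>set ys. x < y"
  shows "lds (ys @ [x]) = Suc (lds ys)"
proof -
  obtain zs where zs: "subseq zs ys" "sorted_wrt (>) zs" "length zs = lds ys" by (rule lds_witness)
  have "subseq (zs @ [x]) (ys @ [x])" using zs by simp
  moreover have "sorted_wrt (>) (zs @ [x])" using zs assms subseq_set_subset
    by (fastforce simp: sorted_wrt_append)
  ultimately have "Suc (lds ys) \<le> lds (ys @ [x])" using zs length_le_lds by fastforce
  then show ?thesis using lds_snoc_le[of ys x] by simp
qed

lemma lds_map_strict_mono:
  assumes "strict_mono_on (set xs) h"
  shows "lds (map h xs) = lds xs"
proof (rule antisym)
  show "lds (map h xs) \<le> lds xs"
    unfolding lds_le_iff
  proof (intro allI impI)
    fix zs assume zs: "subseq zs (map h xs) \<and> sorted_wrt (>) zs"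
    then obtain ws where ws: "subseq ws xs" "zs = map h ws" by (auto elim: subseq_mapE)
    have "sorted_wrt (\<lambda>a b. h b < h a) ws" using zs ws by (simp add: sorted_wrt_map)
    then have "sorted_wrt (>) ws"
      by (rule sorted_wrt_mono_rel[rotated])
        (use strict_mono_on_less[OF assms] subseq_set_subset[OF ws(1)] in blast)
    then have "length ws \<le> lds xs" using ws length_le_lds by blast
    then show "length zs \<le> lds xs" using ws by simp
  qed
next
  obtain ws where ws: "subseq ws xs" "sorted_wrt (>) ws" "length ws = lds xs" by (rule lds_witness)
  have "sorted_wrt (>) (map h ws)"
    unfolding sorted_wrt_map using ws(2)
    by (rule sorted_wrt_mono_rel[rotated])
      (use strict_mono_onD[OF assms] subseq_set_subset[OF ws(1)] in blast)
  moreover have "subseq (map h ws) (map h xs)" using ws subseq_map by blast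
  ultimately show "lds xs \<le> lds (map h xs)" using length_le_lds ws by fastforce
qed

lemma length_le_1_if_sorted_gt_const:
  fixes xs :: "'a::linorder list"
  assumes "sorted_wrt (>) xs" "\<forall>a\<in>set xs. \<forall>b\<in>set xs. a = b"
  shows "length xs \<le> 1"
  using assms by (cases xs; cases "tl xs") auto

text \<open>A longest decreasing subsequence of \<open>zs @ [x]\<close> either ends in \<open>x\<close> and extends by \<open>y\<close>, or
  it avoids \<open>x\<close>; then replacing its at most one entry below \<open>y\<close> by \<open>x, y\<close> makes it longer.\<close>

lemma lds_append_descent:
  assumes yx: "y < x" and zs1: "\<forall>z\<in>set zs. x < z \<or> z < y"
    and zs2: "\<forall>z\<in>set zs. \<forall>z'\<in>set zs. z < y \<longrightarrow> z' < y \<longrightarrow> z = z'"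
  shows "lds (zs @ [x, y]) = Suc (lds (zs @ [x]))"
proof (rule antisym)
  show "lds (zs @ [x, y]) \<le> Suc (lds (zs @ [x]))" using lds_snoc_le[of "zs @ [x]" y] by simp
next
  obtain ws where ws: "subseq ws (zs @ [x])" "sorted_wrt (>) ws" "length ws = lds (zs @ [x])"
    by (rule lds_witness)
  then obtain w1 w2 where w: "ws = w1 @ w2" "subseq w1 zs" "subseq w2 [x]"
    by (auto elim: subseq_appendE)
  have w2: "w2 = [] \<or> w2 = [x]" using w(3) by (cases w2) (auto split: if_splits dest: list_emb_Nil2)
  have w1z: "set w1 \<subseteq> set zs" using w(2) subseq_set_subset by blast
  show "Suc (lds (zs @ [x])) \<le> lds (zs @ [x, y])"
  proof (cases "w2 = [x]")
    case True
    have "subseq (ws @ [y]) ((zs @ [x]) @ [y])" using list_emb_append_mono[OF ws(1), of "[y]" "[y]"] by simp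
    then have s: "subseq (ws @ [y]) (zs @ [x, y])" by simp
    have "\<forall>z\<in>set w1. x < z" using ws(2) w True by (simp add: sorted_wrt_append)
    then have "sorted_wrt (>) (ws @ [y])" using ws(2) w True yx by (auto simp: sorted_wrt_append)
    then show ?thesis using s length_le_lds ws(3) by fastforce
  next
    case False
    then have ww: "ws = w1" using w w2 by simp
    define u where "u = filter (\<lambda>z. x < z) w1"
    have "subseq u zs" unfolding u_def using w(2) subseq_filter_left subseq_order.order_trans by blast
    then have s: "subseq (u @ [x, y]) (zs @ [x, y])" by (simp add: list_emb_append_mono)
    have "sorted_wrt (>) u" unfolding u_def using ws(2) ww by (simp add: sorted_wrt_filter)
    then have sd: "sorted_wrt (>) (u @ [x, y])" using yx by (auto simp: sorted_wrt_append u_def)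
    have "length (filter (\<lambda>z. \<not> x < z) w1) \<le> 1"
    proof (rule length_le_1_if_sorted_gt_const)
      show "sorted_wrt (>) (filter (\<lambda>z. \<not> x < z) w1)" using ws(2) ww by (simp add: sorted_wrt_filter)
      show "\<forall>a\<in>set (filter (\<lambda>z. \<not> x < z) w1). \<forall>b\<in>set (filter (\<lambda>z. \<not> x < z) w1). a = b"
        using zs1 zs2 w1z by auto
    qed
    moreover have "length u + length (filter (\<lambda>z. \<not> x < z) w1) = length w1"
      unfolding u_def by (rule sum_length_filter_compl)
    ultimately have "Suc (length ws) \<le> length (u @ [x, y])" using ww by simp
    then show ?thesis using length_le_lds[OF s sd] ws(3) by simp
  qed
qed

section \<open>Pattern containment\<close>

lemma subseq_nth_strict_mono:
  assumes "\<forall>a b. a < b \<and> b < m \<longrightarrow> idx a < idx b" "\<forall>a<m. idx a < length xs"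
  shows "subseq (map (\<lambda>a. xs ! idx a) [0..<m]) xs"
proof -
  have "subseq (map (\<lambda>a. xs ! idx a) [0..<m]) (take N xs)"
    if "\<forall>a b. a < b \<and> b < m \<longrightarrow> idx a < idx b" "\<forall>a<m. idx a < N" "N \<le> length xs" for N
    using that
  proof (induction m arbitrary: N)
    case (Suc m)
    let ?i = "idx m"
    have i: "?i < N" using Suc.prems by simp
    have "subseq (map (\<lambda>a. xs ! idx a) [0..<m]) (take ?i xs)"
      using Suc.prems i by (intro Suc.IH) auto
    then have "subseq (map (\<lambda>a. xs ! idx a) [0..<m] @ [xs ! ?i]) (take ?i xs @ [xs ! ?i])"
      using list_emb_append_mono by fastforce
    moreover have "take ?i xs @ [xs ! ?i] = take (Suc ?i) xs"
      using i Suc.prems(3) by (simp add: take_Suc_conv_app_nth)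
    ultimately have "subseq (map (\<lambda>a. xs ! idx a) [0..<Suc m]) (take (Suc ?i) xs)" by simp
    moreover have "take (Suc ?i) xs = take (Suc ?i) (take N xs)" using i by (simp add: min_def)
    then have "subseq (take (Suc ?i) xs) (take N xs)" by (metis prefix_imp_subseq take_is_prefix)
    ultimately show ?case by (rule subseq_order.order_trans)
  qed simp
  from this[OF assms order_refl] show ?thesis by simp
qed

lemma subseq_strict_mono_index:
  assumes "subseq ys xs"
  shows "\<exists>idx. (\<forall>a b. a < b \<and> b < length ys \<longrightarrow> idx a < idx b) \<and>
               (\<forall>a<length ys. idx a < length xs \<and> ys ! a = xs ! idx a)"
  using assms
proof (induction rule: list_emb.induct)
  case (list_emb_Nil ys)
  then show ?case by simp
next
  case (list_emb_Cons xs ys y)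
  then obtain idx where idx: "\<forall>a b. a < b \<and> b < length xs \<longrightarrow> idx a < idx b"
    "\<forall>a<length xs. idx a < length ys \<and> xs ! a = ys ! idx a" by blast
  show ?case
    by (rule exI[of _ "\<lambda>a. Suc (idx a)"]) (use idx in auto)
next
  case (list_emb_Cons2 x y xs ys)
  then obtain idx where idx: "\<forall>a b. a < b \<and> b < length xs \<longrightarrow> idx a < idx b"
    "\<forall>a<length xs. idx a < length ys \<and> xs ! a = ys ! idx a" by blast
  let ?j = "\<lambda>a. case a of 0 \<Rightarrow> 0 | Suc a' \<Rightarrow> Suc (idx a')"
  have mono: "\<forall>a b. a < b \<and> b < length (x # xs) \<longrightarrow> ?j a < ?j b"
  proof (intro allI impI)
    fix a b assume ab: "a < b \<and> b < length (x # xs)"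
    then obtain b' where b': "b = Suc b'" by (cases b) auto
    show "?j a < ?j b"
    proof (cases a)
      case 0 then show ?thesis using b' by simp
    next
      case (Suc a') then show ?thesis using b' ab idx(1) by auto
    qed
  qed
  have nth: "\<forall>a<length (x # xs). ?j a < length (y # ys) \<and> (x # xs) ! a = (y # ys) ! ?j a"
  proof (intro allI impI)
    fix a assume a: "a < length (x # xs)"
    show "?j a < length (y # ys) \<and> (x # xs) ! a = (y # ys) ! ?j a"
    proof (cases a)
      case 0 then show ?thesis using list_emb_Cons2 by simp
    next
      case (Suc a') then show ?thesis using a idx(2) by auto
    qed
  qed
  show ?case using mono nth by blast
qed

lemma contains_pattern_iff_subseq:
  "contains_pattern xs \<sigma> \<longleftrightarrow>
    (\<exists>ys. subseq ys xs \<and> length ys = length \<sigma> \<and>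
       (\<forall>a<length \<sigma>. \<forall>b<length \<sigma>. (ys ! a < ys ! b) = (\<sigma> ! a < \<sigma> ! b)))"
proof
  assume "contains_pattern xs \<sigma>"
  then obtain idx where idx: "\<forall>a b. a < b \<and> b < length \<sigma> \<longrightarrow> idx a < idx b"
    "\<forall>a < length \<sigma>. idx a < length xs"
    "\<forall>a < length \<sigma>. \<forall>b < length \<sigma>. (xs ! idx a < xs ! idx b) \<longleftrightarrow> (\<sigma> ! a < \<sigma> ! b)"
    unfolding contains_pattern_def by blast
  let ?ys = "map (\<lambda>a. xs ! idx a) [0..<length \<sigma>]"
  have "subseq ?ys xs" using idx by (intro subseq_nth_strict_mono) auto
  moreover have "\<forall>a<length \<sigma>. \<forall>b<length \<sigma>. (?ys ! a < ?ys ! b) = (\<sigma> ! a < \<sigma> ! b)"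
    using idx(3) by simp
  ultimately show "\<exists>ys. subseq ys xs \<and> length ys = length \<sigma> \<and>
       (\<forall>a<length \<sigma>. \<forall>b<length \<sigma>. (ys ! a < ys ! b) = (\<sigma> ! a < \<sigma> ! b))" by auto
next
  assume "\<exists>ys. subseq ys xs \<and> length ys = length \<sigma> \<and>
       (\<forall>a<length \<sigma>. \<forall>b<length \<sigma>. (ys ! a < ys ! b) = (\<sigma> ! a < \<sigma> ! b))"
  then obtain ys where ys: "subseq ys xs" "length ys = length \<sigma>"
    "\<forall>a<length \<sigma>. \<forall>b<length \<sigma>. (ys ! a < ys ! b) = (\<sigma> ! a < \<sigma> ! b)" by blast
  obtain idx where idx: "\<forall>a b. a < b \<and> b < length ys \<longrightarrow> idx a < idx b"
      "\<forall>a<length ys. idx a < length xs \<and> ys ! a = xs ! idx a"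
    using subseq_strict_mono_index[OF ys(1)] by blast
  show "contains_pattern xs \<sigma>" unfolding contains_pattern_def
    by (rule exI[of _ idx]) (use idx ys in auto)
qed

lemma avoids_subseq: "subseq ys xs \<Longrightarrow> avoids xs \<sigma> \<Longrightarrow> avoids ys \<sigma>"
  unfolding avoids_def contains_pattern_iff_subseq by (meson subseq_order.order_trans)

lemma avoids_map_strict_mono:
  assumes "strict_mono_on (set xs) h"
  shows "avoids (map h xs) \<sigma> \<longleftrightarrow> avoids xs \<sigma>"
proof -
  have nth: "(map h xs ! i < map h xs ! j) \<longleftrightarrow> (xs ! i < xs ! j)"
    if "i < length xs" "j < length xs" for i j
    using that strict_mono_on_less[OF assms] by simp
  have "(\<forall>a<length \<sigma>. \<forall>b<length \<sigma>. (map h xs ! idx a < map h xs ! idx b) = (\<sigma> ! a < \<sigma> ! b)) \<longleftrightarrow>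
      (\<forall>a<length \<sigma>. \<forall>b<length \<sigma>. (xs ! idx a < xs ! idx b) = (\<sigma> ! a < \<sigma> ! b))"
    if "\<forall>a<length \<sigma>. idx a < length xs" for idx
    using that nth by simp
  then show ?thesis
    unfolding avoids_def contains_pattern_def length_map by blast
qed

lemma length_delta [simp]: "length (delta k) = k"
  unfolding delta_def by simp

lemma nth_delta: "a < k \<Longrightarrow> delta k ! a = k - a"
  unfolding delta_def by (subst rev_nth) (auto simp del: upt_Suc)

lemma avoids_delta_iff: "avoids xs (delta k) \<longleftrightarrow> lds xs < k"
proof -
  have pattern: "(\<forall>a<k. \<forall>b<k. (ys ! a < ys ! b) = (delta k ! a < delta k ! b)) \<longleftrightarrow> sorted_wrt (>) ys"
    if "length ys = k" for ys :: "nat list"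
  proof -
    have "(\<forall>a<k. \<forall>b<k. (ys ! a < ys ! b) = (delta k ! a < delta k ! b)) \<longleftrightarrow>
          (\<forall>a<k. \<forall>b<k. (ys ! a < ys ! b) = (b < a))"
      by (auto simp: nth_delta)
    also have "\<dots> \<longleftrightarrow> sorted_wrt (>) ys"
    proof
      assume "sorted_wrt (>) ys"
      then have "ys ! b < ys ! a" if "a < b" "b < k" for a b
        using that \<open>length ys = k\<close> by (auto simp: sorted_wrt_iff_nth_less)
      then show "\<forall>a<k. \<forall>b<k. (ys ! a < ys ! b) = (b < a)"
        by (metis less_asym linorder_neqE_nat)
    qed (use that in \<open>auto simp: sorted_wrt_iff_nth_less\<close>)
    finally show ?thesis .
  qed
  have "contains_pattern xs (delta k) \<longleftrightarrow> k \<le> lds xs"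
  proof
    assume "contains_pattern xs (delta k)"
    then obtain ys where ys: "subseq ys xs" "length ys = k"
      "\<forall>a<k. \<forall>b<k. (ys ! a < ys ! b) = (delta k ! a < delta k ! b)"
      unfolding contains_pattern_iff_subseq by auto
    then show "k \<le> lds xs" using pattern length_le_lds by fastforce
  next
    assume "k \<le> lds xs"
    then obtain ys where ys: "subseq ys xs" "sorted_wrt (>) ys" "k \<le> length ys"
      unfolding lds_ge_iff by blast
    have "subseq (take k ys) xs"
      using ys(1) by (meson prefix_imp_subseq subseq_order.order_trans take_is_prefix)
    moreover have "sorted_wrt (>) (take k ys)" using ys(2) by (rule sorted_wrt_take)
    ultimately show "contains_pattern xs (delta k)"
      unfolding contains_pattern_iff_subseq using pattern[of "take k ys"] ys(3)
      by (intro exI[of _ "take k ys"]) simp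
  qed
  then show ?thesis unfolding avoids_def by (simp add: not_le)
qed

lemma avoids_213_iff:
  "avoids xs [2,1,3] \<longleftrightarrow> (\<forall>x y z. subseq [x,y,z] xs \<longrightarrow> \<not> (y < x \<and> x < z))"
proof -
  have pattern: "(\<forall>a<length [2::nat,1,3]. \<forall>b<length [2::nat,1,3].
              ([x,y,z] ! a < [x,y,z] ! b) = ([2::nat,1,3] ! a < [2,1,3] ! b))
           \<longleftrightarrow> y < x \<and> x < z" for x y z :: nat
    by (auto simp: less_Suc_eq)
  have "contains_pattern xs [2,1,3] \<longleftrightarrow> (\<exists>x y z. subseq [x,y,z] xs \<and> y < x \<and> x < z)"
  proof
    assume "contains_pattern xs [2,1,3]"
    then obtain ys where ys: "subseq ys xs" "length ys = length [2::nat,1,3]"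
      "\<forall>a<length [2::nat,1,3]. \<forall>b<length [2::nat,1,3]. (ys ! a < ys ! b) = ([2::nat,1,3] ! a < [2,1,3] ! b)"
      unfolding contains_pattern_iff_subseq by blast
    moreover obtain x y z where "ys = [x, y, z]"
      using ys(2) by (cases ys; cases "tl ys"; cases "tl (tl ys)") auto
    ultimately show "\<exists>x y z. subseq [x,y,z] xs \<and> y < x \<and> x < z" using pattern by blast
  next
    assume "\<exists>x y z. subseq [x,y,z] xs \<and> y < x \<and> x < z"
    then obtain x y z where "subseq [x,y,z] xs" "y < x" "x < z" by blast
    then show "contains_pattern xs [2,1,3]" unfolding contains_pattern_iff_subseq
      using pattern[of x y z] by (intro exI[of _ "[x,y,z]"]) simp
  qed
  then show ?thesis unfolding avoids_def by blast
qed

lemma avoids_213_Cons_less: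
  assumes "\<forall>v\<in>set l. h < v" "avoids l [2,1,3]"
  shows "avoids (h # l) [2,1,3]"
  unfolding avoids_213_iff
proof (intro allI impI notI)
  fix x y z assume s: "subseq [x,y,z] (h # l)" and yxz: "y < x \<and> x < z"
  show False
  proof (cases "x = h")
    case True
    then have "y \<in> set l" using s subseq_set_subset by fastforce
    then show False using assms(1) yxz True by auto
  next
    case False
    then have "subseq [x,y,z] l" using s by simp
    then show False using assms(2) yxz unfolding avoids_213_iff by blast
  qed
qed

lemma avoids_213_append_above:
  assumes "\<forall>u\<in>set U. \<forall>v\<in>set V. v < u" "avoids U [2,1,3]" "avoids V [2,1,3]"
  shows "avoids (U @ V) [2,1,3]"
  unfolding avoids_213_iff
proof (intro allI impI notI)
  fix x y z assume s: "subseq [x,y,z] (U @ V)" and yxz: "y < x \<and> x < z"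
  then obtain s1 s2 where ss: "[x,y,z] = s1 @ s2" "subseq s1 U" "subseq s2 V"
    by (auto elim: subseq_appendE)
  have "s1 = [] \<or> s1 = [x] \<and> s2 = [y,z] \<or> s1 = [x,y] \<and> s2 = [z] \<or> s2 = []"
    using ss(1) by (cases s1; cases "tl s1"; cases "tl (tl s1)") auto
  then show False
  proof (elim disjE conjE)
    assume "s1 = []" then show False using assms(3) ss yxz unfolding avoids_213_iff by auto
  next
    assume "s1 = [x]" "s2 = [y,z]"
    then have "x \<in> set U" "z \<in> set V" using ss subseq_set_subset by fastforce+
    then show False using assms(1) yxz by fastforce
  next
    assume "s1 = [x,y]" "s2 = [z]"
    then have "x \<in> set U" "z \<in> set V" using ss subseq_set_subset by fastforce+
    then show False using assms(1) yxz by fastforce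
  next
    assume "s2 = []" then show False using assms(2) ss yxz unfolding avoids_213_iff by auto
  qed
qed

lemma avoids_213_Cons_split:
  assumes "avoids (a # r) [2,1,3]" "a \<notin> set r"
  shows "r = filter (\<lambda>x. a < x) r @ filter (\<lambda>x. x < a) r"
  using assms
proof (induction r)
  case (Cons v r)
  have "avoids (a # r) [2,1,3]"
    using Cons.prems(1) by (rule avoids_subseq[rotated]) (use subseq_drop_many[of r r "[v]"] in simp)
  then have IH: "r = filter (\<lambda>x. a < x) r @ filter (\<lambda>x. x < a) r"
    using Cons.prems(2) by (intro Cons.IH) auto
  show ?case
  proof (cases "a < v")
    case True
    then show ?thesis using IH by simp
  next
    case False
    then have va: "v < a" using Cons.prems(2) by auto
    have below: "\<forall>z\<in>set r. z < a"
    proof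
      fix z assume z: "z \<in> set r"
      have "subseq [a,v,z] (a # v # r)" using z by (simp add: subseq_singleton_left)
      then have "\<not> a < z" using Cons.prems(1) va unfolding avoids_213_iff by blast
      moreover have "z \<noteq> a" using Cons.prems(2) z by auto
      ultimately show "z < a" by simp
    qed
    then have "filter (\<lambda>x. a < x) r = []" by (metis filter_False less_asym)
    moreover have "filter (\<lambda>x. x < a) r = r" using below by (metis filter_True)
    ultimately show ?thesis using va by simp
  qed
qed simp

section \<open>Cycle forms and the permutations they encode\<close>

text \<open>A cycle form \<open>c\<close> encodes the permutation \<open>cycle_of_list c\<close>, which sends each entry to its right
  neighbour in the closed walk \<open>c @ [hd c]\<close>.\<close>

lemma nth_append_hd_mod:
  assumes "i < length cs"
  shows "(cs @ [hd cs]) ! Suc i = cs ! (Suc i mod length cs)"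
proof (cases "Suc i < length cs")
  case False
  then have "Suc i = length cs" using assms by simp
  then show ?thesis by (cases cs) (simp_all add: nth_append)
qed (simp add: nth_append)

lemma sublist_nth_Suc: "Suc i < length xs \<Longrightarrow> sublist [xs ! i, xs ! Suc i] xs"
  using sublist_appendI[of "[xs ! i, xs ! Suc i]" "take i xs" "drop (Suc (Suc i)) xs"]
  by (simp add: Cons_nth_drop_Suc)

lemma sublist_last_hd:
  assumes "xs \<noteq> []" "ys \<noteq> []"
  shows "sublist [last xs, hd ys] (xs @ ys)"
proof -
  have "xs @ ys = butlast xs @ [last xs, hd ys] @ tl ys"
    using assms by (metis append.assoc append_Cons append_Nil append_butlast_last_id list.collapse)
  then show ?thesis by (metis sublist_appendI)
qed

lemma sublist_pair_not_hd:
  assumes "distinct xs" "sublist [x, y] xs"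
  shows "y \<noteq> hd xs"
proof -
  obtain ps ss where "xs = ps @ [x, y] @ ss" using assms(2) by (auto simp: sublist_def)
  then show ?thesis using assms(1) by (cases ps) auto
qed

lemma sublist_pair_snoc:
  "sublist [x, y] (xs @ [z]) \<Longrightarrow> sublist [x, y] xs \<or> xs \<noteq> [] \<and> x = last xs \<and> y = z"
  unfolding sublist_append by (auto simp: Cons_eq_append_conv suffix_def prefix_def dest: sublist_length_le)

lemma cycle_of_list_nth:
  assumes "distinct cs" "i < length cs"
  shows "cycle_of_list cs (cs ! i) = cs ! (Suc i mod length cs)"
proof -
  have "map (cycle_of_list cs) cs = rotate1 cs" using cyclic_rotation[OF assms(1), of 1] by simp
  then have "cycle_of_list cs (cs ! i) = rotate1 cs ! i" by (metis assms(2) nth_map)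
  then show ?thesis using assms(2) by (simp add: nth_rotate1)
qed

lemma cycle_of_list_eqI:
  assumes "distinct cs" "sublist [x, y] (cs @ [hd cs])"
  shows "cycle_of_list cs x = y"
proof -
  obtain u w where split: "cs @ [hd cs] = u @ x # y # w" using assms(2) by (auto simp: sublist_def)
  have len: "length u < length cs" using arg_cong[OF split, of length] by simp
  have "cs ! length u = x" using arg_cong[OF split, of "\<lambda>l. l ! length u"] len by (simp add: nth_append)
  moreover have "cs ! (Suc (length u) mod length cs) = y"
    using arg_cong[OF split, of "\<lambda>l. l ! Suc (length u)"] nth_append_hd_mod[OF len] by (simp add: nth_append)
  ultimately show ?thesis using cycle_of_list_nth[OF assms(1) len] by simp
qed

lemma sublist_cycle_of_list:
  assumes "distinct cs" "x \<in> set cs"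
  shows "sublist [x, cycle_of_list cs x] (cs @ [hd cs])"
proof -
  obtain i where i: "i < length cs" "x = cs ! i" using assms(2) by (auto simp: in_set_conv_nth)
  let ?y = "(cs @ [hd cs]) ! Suc i"
  have "sublist [x, ?y] (cs @ [hd cs])"
    using sublist_nth_Suc[of i "cs @ [hd cs]"] i by (simp add: nth_append)
  then show ?thesis using cycle_of_list_eqI[OF assms(1)] by simp
qed

lemma cyclic_perm_cycle_of_list:
  assumes "distinct c" "set c = {1..n}" "hd c = 1"
  shows "cyclic_perm n (cycle_of_list c)" "cycle_form n (cycle_of_list c) = c"
proof -
  have len: "length c = n" using assms(1,2) distinct_card by fastforce
  have powers: "(cycle_of_list c ^^ i) 1 = c ! i" if "i < n" for i
  proof -
    have "c ! 0 = 1" using that len assms(3) by (cases c) auto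
    then have "(cycle_of_list c ^^ i) 1 = map (cycle_of_list c ^^ i) c ! 0"
      using that len by simp
    also have "\<dots> = c ! i" using cyclic_rotation[OF assms(1)] that len by (simp add: nth_rotate)
    finally show ?thesis .
  qed
  have "cycle_form n (cycle_of_list c) = map ((!) c) [0..<length c]"
    unfolding cycle_form_def len by (rule map_cong) (use powers in auto)
  then show cf: "cycle_form n (cycle_of_list c) = c" by (simp add: map_nth)
  show "cyclic_perm n (cycle_of_list c)"
    unfolding cyclic_perm_def cf using cycle_permutes[of c] assms(2) by simp
qed

lemma permutes_eq_but_one:
  assumes "p permutes S" "q permutes S" "\<And>x. x \<in> S - {a} \<Longrightarrow> p x = q x"
  shows "p = q"
proof
  fix x
  show "p x = q x"
  proof (cases "x \<in> S - {a}")
    case False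
    show ?thesis
    proof (cases "x \<in> S")
      case True
      obtain b where b: "q b = p x" using permutes_surj[OF assms(2)] by (metis surjD)
      have "b \<in> S" using b True permutes_in_image[OF assms(1)] permutes_not_in[OF assms(2)] by metis
      then have "b = x \<or> p b = q b" using False True assms(3) by auto
      then show ?thesis using b permutes_inj[OF assms(1)] by (metis injD)
    qed (use assms in \<open>simp add: permutes_not_in\<close>)
  qed (use assms in simp)
qed

lemma cyclic_perm_eq_cycle_of_list:
  assumes "cyclic_perm n p" "1 \<le> n"
  shows "p = cycle_of_list (cycle_form n p)"
proof -
  let ?c = "cycle_form n p"
  have p: "p permutes {1..n}" and set_c: "set ?c = {1..n}"
    using assms(1) unfolding cyclic_perm_def by auto
  have len: "length ?c = n" unfolding cycle_form_def by simp
  then have dist: "distinct ?c" using set_c by (intro card_distinct) simp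
  have agree: "p (?c ! i) = cycle_of_list ?c (?c ! i)" if "Suc i < n" for i
  proof -
    have "p (?c ! i) = ?c ! Suc i" using that unfolding cycle_form_def by simp
    then show ?thesis using cycle_of_list_nth[OF dist, of i] len that by simp
  qed
  show ?thesis
  proof (rule permutes_eq_but_one[OF p _ , of _ "?c ! (n - 1)"])
    show "cycle_of_list ?c permutes {1..n}" using cycle_permutes[of ?c] set_c by simp
    fix x assume x: "x \<in> {1..n} - {?c ! (n - 1)}"
    then have "x \<in> set ?c" using set_c by simp
    then obtain i where i: "i < n" "x = ?c ! i" using len by (metis in_set_conv_nth)
    moreover have "i \<noteq> n - 1" using x i by auto
    ultimately have "Suc i < n" by linarith
    then show "p x = cycle_of_list ?c x" using agree i by simp
  qed
qed

section \<open>213-avoiding cycle forms\<close>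

definition cycle_forms_213 :: "nat \<Rightarrow> nat list set" where
  "cycle_forms_213 n = {c. distinct c \<and> set c = {1..n} \<and> hd c = 1 \<and> avoids c [2,1,3]}"

definition cycle_one_line :: "nat list \<Rightarrow> nat list" where
  "cycle_one_line c = one_line (length c) (cycle_of_list c)"

lemma length_cycle_forms_213: "c \<in> cycle_forms_213 n \<Longrightarrow> length c = n"
  unfolding cycle_forms_213_def using distinct_card by fastforce

lemma finite_cycle_forms_213: "finite (cycle_forms_213 n)"
proof (rule finite_subset)
  show "cycle_forms_213 n \<subseteq> {c. set c \<subseteq> {1..n} \<and> length c = n}"
    using length_cycle_forms_213 unfolding cycle_forms_213_def by auto
  show "finite {c. set c \<subseteq> {1..n} \<and> length c = n}"
    by (rule finite_lists_length_eq) simp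
qed

text \<open>Since \<open>hd []\<close> is unspecified, \<open>cycle_forms_213 0\<close> may contain \<open>[]\<close>; hence \<open>1 \<le> m\<close>.\<close>

lemma cycle_forms_213_tl:
  assumes "c \<in> cycle_forms_213 m" "1 \<le> m"
  shows "c = 1 # tl c" "set (tl c) = {2..m}" "distinct (tl c)" "avoids (tl c) [2,1,3]"
proof -
  have d: "distinct c" and s: "set c = {1..m}" and h: "hd c = 1" and a: "avoids c [2,1,3]"
    using assms unfolding cycle_forms_213_def by auto
  show c: "c = 1 # tl c" using h s assms(2) by (cases c) auto
  then have "set c = insert 1 (set (tl c))" "1 \<notin> set (tl c)" using d by (metis list.set(2), metis distinct.simps(2))
  then have "set (tl c) = {1..m} - {1}" using s by auto
  also have "\<dots> = {2..m}" by auto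
  finally show "set (tl c) = {2..m}" .
  show "distinct (tl c)" using d by (simp add: distinct_tl)
  show "avoids (tl c) [2,1,3]" using a by (rule avoids_subseq[rotated]) (metis c subseq_Cons' subseq_order.order_refl)
qed

lemma cycle_forms_213_1: "cycle_forms_213 1 = {[1]}"
proof -
  have "c = [1]" if "c \<in> cycle_forms_213 1" for c
    using cycle_forms_213_tl(1)[OF that order_refl] length_cycle_forms_213[OF that] by (metis length_0_conv
        diff_self_eq_0 length_tl)
  moreover have "avoids [1] [2,1,3]" unfolding avoids_213_iff by (auto dest: list_emb_length)
  ultimately show ?thesis unfolding cycle_forms_213_def by auto
qed

lemma a213_eq_card:
  assumes "1 \<le> n"
  shows "a213 n k = card {c \<in> cycle_forms_213 n. lds (cycle_one_line c) < k}"
proof -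
  define P where "P = {p. cyclic_perm n p \<and> avoids (one_line n p) (delta k) \<and> avoids (cycle_form n p) [2,1,3]}"
  have one_line: "one_line n p = cycle_one_line (cycle_form n p)" if "cyclic_perm n p" for p
    using cyclic_perm_eq_cycle_of_list[OF that assms] unfolding cycle_one_line_def cycle_form_def by simp
  have "inj_on (cycle_form n) P"
    by (rule inj_onI) (metis (no_types, lifting) P_def assms cyclic_perm_eq_cycle_of_list mem_Collect_eq)
  moreover have "cycle_form n ` P = {c \<in> cycle_forms_213 n. lds (cycle_one_line c) < k}"
  proof (intro equalityI subsetI)
    fix c assume "c \<in> cycle_form n ` P"
    then obtain p where p: "p \<in> P" "c = cycle_form n p" by blast
    then have cyc: "cyclic_perm n p" unfolding P_def by simp
    then have "distinct c" "set c = {1..n}"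
      using p(2) unfolding cyclic_perm_def by (auto intro: card_distinct simp: cycle_form_def)
    moreover have "hd c = 1" using p(2) assms by (simp add: cycle_form_def hd_map upt_conv_Cons)
    ultimately show "c \<in> {c \<in> cycle_forms_213 n. lds (cycle_one_line c) < k}"
      using p one_line[OF cyc] unfolding P_def cycle_forms_213_def avoids_delta_iff by simp
  next
    fix c assume c: "c \<in> {c \<in> cycle_forms_213 n. lds (cycle_one_line c) < k}"
    then have "distinct c" "set c = {1..n}" "hd c = 1" unfolding cycle_forms_213_def by auto
    note cyc = cyclic_perm_cycle_of_list[OF this]
    have "cycle_of_list c \<in> P"
      using c cyc one_line[OF cyc(1)] unfolding P_def cycle_forms_213_def avoids_delta_iff by simp
    then show "c \<in> cycle_form n ` P" using cyc(2) by force
  qed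
  ultimately have "card P = card {c \<in> cycle_forms_213 n. lds (cycle_one_line c) < k}"
    using card_image by fastforce
  then show ?thesis unfolding a213_def P_def .
qed

section \<open>Joining cycle forms\<close>

definition cycle_join :: "nat \<Rightarrow> nat list \<Rightarrow> nat list \<Rightarrow> nat list" where
  "cycle_join m A B = 1 # Suc m # map (\<lambda>x. x + m) (tl A) @ tl B"

lemma Cons_1_in_cycle_forms_213:
  assumes "distinct xs" "set xs = {2..n}" "avoids xs [2,1,3]" "1 \<le> n"
  shows "1 # xs \<in> cycle_forms_213 n"
proof -
  have "avoids (1 # xs) [2,1,3]" using assms(2,3) by (intro avoids_213_Cons_less) auto
  moreover have "insert 1 {2..n} = {1..n}" using assms(4) by auto
  ultimately show ?thesis unfolding cycle_forms_213_def using assms(1,2) by auto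
qed

lemma cycle_join_in_cycle_forms_213:
  assumes A: "A \<in> cycle_forms_213 m1" and B: "B \<in> cycle_forms_213 m2" and "1 \<le> m1" "1 \<le> m2"
  shows "cycle_join m2 A B \<in> cycle_forms_213 (m1 + m2)"
proof -
  note FA = cycle_forms_213_tl[OF A \<open>1 \<le> m1\<close>] and FB = cycle_forms_213_tl[OF B \<open>1 \<le> m2\<close>]
  let ?H = "map (\<lambda>x. x + m2) (tl A)"
  have sH: "set ?H = {m2 + 2..m1 + m2}" using FA(2) by (simp add: add.commute)
  have "cycle_join m2 A B = 1 # (Suc m2 # ?H) @ tl B" by (simp add: cycle_join_def)
  also have "\<dots> \<in> cycle_forms_213 (m1 + m2)"
  proof (rule Cons_1_in_cycle_forms_213)
    show "distinct ((Suc m2 # ?H) @ tl B)" using sH FA(3) FB(2,3) by (auto simp: distinct_map inj_on_def)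
    show "set ((Suc m2 # ?H) @ tl B) = {2..m1 + m2}" using sH FB(2) assms by auto
    have "avoids ?H [2,1,3]" using FA(4) by (subst avoids_map_strict_mono) (auto simp: strict_mono_on_def)
    then have "avoids (Suc m2 # ?H) [2,1,3]" using sH by (intro avoids_213_Cons_less) auto
    then show "avoids ((Suc m2 # ?H) @ tl B) [2,1,3]"
      using sH FB(2,4) by (intro avoids_213_append_above) auto
  qed (use assms in simp)
  finally show ?thesis .
qed

lemma cycle_join_inj:
  assumes "A \<in> cycle_forms_213 m1" "A' \<in> cycle_forms_213 m1'" "B \<in> cycle_forms_213 m2"
    "B' \<in> cycle_forms_213 m2" "1 \<le> m1" "1 \<le> m1'" "1 \<le> m2"
    and eq: "cycle_join m2 A B = cycle_join m2 A' B'"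
  shows "A = A'" "B = B'"
proof -
  have "map (\<lambda>x. x + m2) (tl A) @ tl B = map (\<lambda>x. x + m2) (tl A') @ tl B'"
    using eq unfolding cycle_join_def by simp
  moreover have "length (tl B) = length (tl B')"
    using length_cycle_forms_213 assms(3,4) by simp
  ultimately have "map (\<lambda>x. x + m2) (tl A) = map (\<lambda>x. x + m2) (tl A')" "tl B = tl B'"
    by (simp_all add: append_eq_append_conv)
  then have "tl A = tl A'" "tl B = tl B'" by (simp_all add: inj_map_eq_map inj_on_def)
  then show "A = A'" "B = B'" using cycle_forms_213_tl(1) assms(1-7) by metis+
qed

lemma cycle_forms_213_decompose:
  assumes c: "c \<in> cycle_forms_213 n" and n: "2 \<le> n"
  obtains m A B where "1 \<le> m" "m < n" "A \<in> cycle_forms_213 (n - m)" "B \<in> cycle_forms_213 m"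
    "c = cycle_join m A B"
proof -
  have n1: "1 \<le> n" using n by simp
  note Fc = cycle_forms_213_tl[OF c n1]
  have "length (tl c) = n - 1" using length_cycle_forms_213[OF c] by simp
  then obtain a r where ar: "tl c = a # r" using n by (cases "tl c") auto
  have set_ar: "set (a # r) = {2..n}" and "distinct (a # r)" using Fc(2,3) ar by simp_all
  then have a: "a \<in> {2..n}" and "a \<notin> set r" and "distinct r" and sr: "set r = {2..n} - {a}"
    by auto
  have "avoids (a # r) [2,1,3]" using Fc(4) ar by simp
  define H where "H = filter (\<lambda>x. a < x) r"
  define L where "L = filter (\<lambda>x. x < a) r"
  have rHL: "r = H @ L"
    unfolding H_def L_def by (rule avoids_213_Cons_split) fact+
  define m where "m = a - 1"
  have m: "1 \<le> m" "m < n" using a unfolding m_def by auto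
  have "set H = {x \<in> {2..n} - {a}. a < x}" unfolding H_def using sr by auto
  also have "\<dots> = {2 + m..n - m + m}" using a unfolding m_def by force
  also have "\<dots> = (\<lambda>x. x + m) ` {2..n - m}" by (rule image_add_atLeastAtMost'[symmetric])
  finally have sH: "set H = (\<lambda>x. x + m) ` {2..n - m}" .
  have "set L = {x \<in> {2..n} - {a}. x < a}" unfolding L_def using sr by auto
  also have "\<dots> = {2..m}" using a unfolding m_def by force
  finally have sL: "set L = {2..m}" .
  define A where "A = 1 # map (\<lambda>x. x - m) H"
  define B where "B = 1 # L"
  have H_shift: "map (\<lambda>x. x + m) (map (\<lambda>x. x - m) H) = H"
    unfolding map_map comp_def using sH by (intro map_idI) auto
  have "subseq H (a # r)" "subseq L (a # r)"
    unfolding H_def L_def by (rule list_emb.list_emb_Cons, rule subseq_filter_left)+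
  then have "avoids H [2,1,3]" "avoids L [2,1,3]"
    using \<open>avoids (a # r) [2,1,3]\<close> avoids_subseq by blast+
  have "A \<in> cycle_forms_213 (n - m)"
    unfolding A_def
  proof (rule Cons_1_in_cycle_forms_213)
    show "set (map (\<lambda>x. x - m) H) = {2..n - m}" unfolding set_map sH image_image by simp
    have "distinct H" using \<open>distinct r\<close> unfolding H_def by simp
    moreover have "inj_on (\<lambda>x. x - m) (set H)" using sH by (auto simp: inj_on_def)
    ultimately show "distinct (map (\<lambda>x. x - m) H)" by (simp add: distinct_map)
    show "avoids (map (\<lambda>x. x - m) H) [2,1,3]"
      using \<open>avoids H [2,1,3]\<close> sH by (subst avoids_map_strict_mono) (auto simp: strict_mono_on_def)
  qed (use m in simp)
  moreover have "B \<in> cycle_forms_213 m"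
    unfolding B_def using \<open>distinct r\<close> sL \<open>avoids L [2,1,3]\<close> m
    by (intro Cons_1_in_cycle_forms_213) (auto simp: L_def)
  moreover have "c = cycle_join m A B"
    using Fc(1) n ar rHL H_shift a unfolding cycle_join_def A_def B_def m_def by simp
  ultimately show ?thesis using that m by blast
qed

lemma card_cycle_forms_213_decompose:
  assumes n: "2 \<le> n"
  shows "card {c \<in> cycle_forms_213 n. Q c} =
    (\<Sum>m = 1..n-1. card {(A, B). A \<in> cycle_forms_213 (n - m) \<and> B \<in> cycle_forms_213 m \<and> Q (cycle_join m A B)})"
proof -
  define S where "S m = {(A, B). A \<in> cycle_forms_213 (n - m) \<and> B \<in> cycle_forms_213 m \<and> Q (cycle_join m A B)}" for m
  define C where "C m = (\<lambda>(A, B). cycle_join m A B) ` S m" for m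
  have union: "{c \<in> cycle_forms_213 n. Q c} = (\<Union>m\<in>{1..n-1}. C m)"
  proof (intro equalityI subsetI)
    fix c assume c: "c \<in> {c \<in> cycle_forms_213 n. Q c}"
    then obtain m A B where "1 \<le> m" "m < n" "A \<in> cycle_forms_213 (n - m)" "B \<in> cycle_forms_213 m"
      "c = cycle_join m A B"
      using cycle_forms_213_decompose[OF _ n] by blast
    then show "c \<in> (\<Union>m\<in>{1..n-1}. C m)" using c unfolding C_def S_def by force
  next
    fix c assume "c \<in> (\<Union>m\<in>{1..n-1}. C m)"
    then obtain m A B where m: "m \<in> {1..n-1}" and AB: "(A, B) \<in> S m" and c: "c = cycle_join m A B"
      unfolding C_def by auto
    have "cycle_join m A B \<in> cycle_forms_213 (n - m + m)"
      using AB m unfolding S_def by (intro cycle_join_in_cycle_forms_213) auto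
    moreover have "n - m + m = n" using m by auto
    ultimately show "c \<in> {c \<in> cycle_forms_213 n. Q c}" using AB c unfolding S_def by simp
  qed
  have finite_S: "finite (S m)" for m
    by (rule finite_subset[of _ "cycle_forms_213 (n - m) \<times> cycle_forms_213 m"])
      (auto simp: S_def finite_cycle_forms_213)
  have card_C: "card (C m) = card (S m)" if "m \<in> {1..n-1}" for m
    unfolding C_def
  proof (rule card_image, rule inj_onI, clarsimp)
    fix A B A' B' assume "(A, B) \<in> S m" "(A', B') \<in> S m" "cycle_join m A B = cycle_join m A' B'"
    then show "A = A' \<and> B = B'"
      using cycle_join_inj[of A "n - m" A' "n - m" B m B'] that unfolding S_def by auto
  qed
  have second: "c ! 1 = Suc m" if "c \<in> C m" for c m using that unfolding C_def by (auto simp: cycle_join_def)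
  have disjoint: "C i \<inter> C j = {}" if "i \<noteq> j" for i j using that second by (metis disjoint_iff nat.inject)
  have "card {c \<in> cycle_forms_213 n. Q c} = (\<Sum>m = 1..n-1. card (C m))"
    unfolding union by (rule card_UN_disjoint) (use finite_S disjoint in \<open>auto simp: C_def\<close>)
  also have "\<dots> = (\<Sum>m = 1..n-1. card (S m))" using card_C by (intro sum.cong) auto
  finally show ?thesis unfolding S_def .
qed

section \<open>One-line notation of a join\<close>

definition join_label :: "nat \<Rightarrow> nat \<Rightarrow> nat \<Rightarrow> nat" where
  "join_label h m v = (if v = 1 then h else v + m)"

lemma cycle_one_line_props:
  assumes "c \<in> cycle_forms_213 m" "1 \<le> m"
  shows "cycle_one_line c = map (cycle_of_list c) [1..<Suc m]" "set (cycle_one_line c) = {1..m}"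
    "distinct (cycle_one_line c)" "cycle_one_line c \<noteq> []" "hd (cycle_one_line c) = cycle_of_list c 1"
proof -
  have "distinct c" and set_c: "set c = {1..m}" using assms(1) unfolding cycle_forms_213_def by auto
  then have p: "cycle_of_list c permutes {1..m}" using cycle_permutes[of c] by simp
  show ol: "cycle_one_line c = map (cycle_of_list c) [1..<Suc m]"
    unfolding cycle_one_line_def one_line_def length_cycle_forms_213[OF assms(1)] ..
  show "set (cycle_one_line c) = {1..m}"
    unfolding ol set_map set_upt atLeastLessThanSuc_atLeastAtMost using permutes_image[OF p] .
  show "distinct (cycle_one_line c)"
    unfolding ol distinct_map using permutes_inj_on[OF p] by (simp add: atLeastLessThanSuc_atLeastAtMost)
  show "cycle_one_line c \<noteq> []" unfolding ol using assms(2) by simp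
  show "hd (cycle_one_line c) = cycle_of_list c 1"
    unfolding ol using assms(2) by (simp add: upt_conv_Cons del: upt_Suc)
qed

lemma cycle_one_line_1: "B \<in> cycle_forms_213 1 \<Longrightarrow> cycle_one_line B = [1]"
  using cycle_forms_213_1 by (auto simp: cycle_one_line_def one_line_def)

lemma hd_cycle_one_line_ge_2:
  assumes B: "B \<in> cycle_forms_213 m" and "2 \<le> m"
  shows "2 \<le> hd (cycle_one_line B)"
proof -
  have m: "1 \<le> m" using assms(2) by simp
  have "length (tl B) = m - 1" using length_cycle_forms_213[OF B] by simp
  then obtain b bs where tl_B: "tl B = b # bs" using assms(2) by (cases "tl B") auto
  have "B = 1 # b # bs" by (subst cycle_forms_213_tl(1)[OF B m]) (simp add: tl_B)
  then have "sublist [1, b] (B @ [hd B])" using sublist_appendI[of "[1, b]" "[]"] by simp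
  then have "cycle_of_list B 1 = b"
    using B unfolding cycle_forms_213_def by (blast intro: cycle_of_list_eqI)
  moreover have "b \<in> {2..m}" using cycle_forms_213_tl(2)[OF B m] tl_B by auto
  ultimately show ?thesis using cycle_one_line_props(5)[OF B m] by simp
qed

context
  fixes A B :: "nat list" and m1 m2 :: nat
  assumes A: "A \<in> cycle_forms_213 m1" and B: "B \<in> cycle_forms_213 m2" and m1: "1 \<le> m1" and m2: "1 \<le> m2"
begin

lemma cycle_join_walk:
  "cycle_join m2 A B @ [hd (cycle_join m2 A B)] = 1 # map (\<lambda>x. x + m2) A @ (tl B @ [1])"
proof -
  have "map (\<lambda>x. x + m2) A = Suc m2 # map (\<lambda>x. x + m2) (tl A)"
    by (subst cycle_forms_213_tl(1)[OF A m1]) simp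
  then show ?thesis by (simp add: cycle_join_def)
qed

lemma distinct_cycle_join: "distinct (cycle_join m2 A B)"
  using cycle_join_in_cycle_forms_213[OF A B m1 m2] unfolding cycle_forms_213_def by simp

lemma cycle_of_list_join_walkI:
  assumes "sublist [x, y] (map (\<lambda>x. x + m2) A @ (tl B @ [1]))"
  shows "cycle_of_list (cycle_join m2 A B) x = y"
  using assms cycle_join_walk by (intro cycle_of_list_eqI[OF distinct_cycle_join]) (simp add: sublist_Cons_right)

lemma cycle_of_list_join_1: "cycle_of_list (cycle_join m2 A B) 1 = Suc m2"
  by (rule cycle_of_list_eqI[OF distinct_cycle_join]) (simp add: cycle_join_def sublist_Cons_right)

lemma cycle_of_list_join_B:
  assumes x: "x \<in> set (tl B)"
  shows "cycle_of_list (cycle_join m2 A B) x = cycle_of_list B x"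
proof (rule cycle_of_list_join_walkI)
  have dist_B: "distinct B" and "x \<in> set B"
    using x cycle_forms_213_tl(2)[OF B m2] B unfolding cycle_forms_213_def by auto
  then have "sublist [x, cycle_of_list B x] (B @ [hd B])" by (rule sublist_cycle_of_list)
  moreover have "B @ [hd B] = 1 # (tl B @ [1])" using cycle_forms_213_tl(1)[OF B m2] by (cases B) auto
  moreover have "x \<noteq> 1" using x cycle_forms_213_tl(2)[OF B m2] by auto
  ultimately have "sublist [x, cycle_of_list B x] (tl B @ [1])" by (simp add: sublist_Cons_right)
  then show "sublist [x, cycle_of_list B x] (map (\<lambda>x. x + m2) A @ (tl B @ [1]))"
    using sublist_append_leftI[of "tl B @ [1]" "map (\<lambda>x. x + m2) A"] by (rule sublist_order.order.trans)
qed

lemma cycle_of_list_join_A: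
  assumes j: "j \<in> {1..m1}"
  shows "cycle_of_list (cycle_join m2 A B) (j + m2) = join_label (cycle_of_list B 1) m2 (cycle_of_list A j)"
proof (rule cycle_of_list_join_walkI)
  have dist_A: "distinct A" and hd_A: "hd A = 1" and "A \<noteq> []" "j \<in> set A"
    using A j m1 unfolding cycle_forms_213_def by auto
  have B_walk: "B @ [hd B] = 1 # (tl B @ [1])" using cycle_forms_213_tl(1)[OF B m2] by (cases B) auto
  have "sublist [1, hd (tl B @ [1])] (B @ [hd B])"
    unfolding B_walk by (cases "tl B") (simp_all add: sublist_Cons_right)
  then have hd_B_walk: "hd (tl B @ [1]) = cycle_of_list B 1"
    using B unfolding cycle_forms_213_def by (blast intro: cycle_of_list_eqI[symmetric])
  have "sublist [j, cycle_of_list A j] (A @ [hd A])" using dist_A \<open>j \<in> set A\<close> by (rule sublist_cycle_of_list)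
  then have "sublist [j, cycle_of_list A j] (A @ [1])" by (simp only: hd_A)
  then consider "sublist [j, cycle_of_list A j] A" | "j = last A" "cycle_of_list A j = 1"
    by (blast dest: sublist_pair_snoc)
  then show "sublist [j + m2, join_label (cycle_of_list B 1) m2 (cycle_of_list A j)]
      (map (\<lambda>x. x + m2) A @ (tl B @ [1]))"
  proof cases
    case 1
    then have "cycle_of_list A j \<noteq> 1" using sublist_pair_not_hd[OF dist_A] hd_A by metis
    then have "join_label (cycle_of_list B 1) m2 (cycle_of_list A j) = cycle_of_list A j + m2"
      unfolding join_label_def by simp
    moreover have "sublist [j + m2, cycle_of_list A j + m2] (map (\<lambda>x. x + m2) A)"
      using map_mono_sublist[OF 1] by simp
    ultimately show ?thesis using sublist_append_rightI by (metis sublist_order.order.trans)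
  next
    case 2
    then have "join_label (cycle_of_list B 1) m2 (cycle_of_list A j) = hd (tl B @ [1])"
      unfolding join_label_def using hd_B_walk by simp
    moreover have "j + m2 = last (map (\<lambda>x. x + m2) A)" using 2 \<open>A \<noteq> []\<close> by (simp add: last_map)
    ultimately show ?thesis using \<open>A \<noteq> []\<close> by (simp add: sublist_last_hd)
  qed
qed

lemma cycle_one_line_join:
  shows "cycle_one_line (cycle_join m2 A B) =
    Suc m2 # tl (cycle_one_line B) @ map (join_label (hd (cycle_one_line B)) m2) (cycle_one_line A)"
proof -
  let ?c = "cycle_join m2 A B"
  have upt_B: "[1..<Suc m2] = 1 # [2..<Suc m2]"
    using upt_conv_Cons[of 1 "Suc m2"] m2 by (simp add: numeral_2_eq_2 del: upt_Suc)
  have "[1..<Suc (m1 + m2)] = [1..<Suc m2] @ [Suc m2..<Suc (m1 + m2)]"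
    using upt_add_eq_append[of 1 "Suc m2" m1] by (simp add: add.commute)
  also note upt_B
  also have "[Suc m2..<Suc (m1 + m2)] = map (\<lambda>j. j + m2) [1..<Suc m1]"
    by (induction m1) simp_all
  finally have split: "[1..<Suc (m1 + m2)] = 1 # [2..<Suc m2] @ map (\<lambda>j. j + m2) [1..<Suc m1]" by simp
  have "map (cycle_of_list ?c) [2..<Suc m2] = map (cycle_of_list B) [2..<Suc m2]"
    using cycle_of_list_join_B cycle_forms_213_tl(2)[OF B m2] by (intro map_cong) auto
  moreover have "map (cycle_of_list ?c) (map (\<lambda>j. j + m2) [1..<Suc m1]) =
      map (join_label (hd (cycle_one_line B)) m2) (cycle_one_line A)"
    using cycle_of_list_join_A cycle_one_line_props(1,5)[OF B m2] cycle_one_line_props(1)[OF A m1] by auto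
  moreover have "tl (cycle_one_line B) = map (cycle_of_list B) [2..<Suc m2]"
    unfolding cycle_one_line_props(1)[OF B m2] upt_B by simp
  ultimately show ?thesis
    using cycle_one_line_props(1)[OF cycle_join_in_cycle_forms_213[OF A B m1 m2]] split cycle_of_list_join_1 m1 m2 by simp
qed

end

section \<open>Decreasing subsequences in the one-line notation of a join\<close>

definition lift_above_1 :: "nat \<Rightarrow> nat" where
  "lift_above_1 v = (if v \<le> 1 then v else Suc v)"

lemma strict_mono_lift_above_1: "strict_mono lift_above_1"
  unfolding strict_mono_def lift_above_1_def by auto

text \<open>In the rotated one-line notation of a join, the block coming from \<open>A\<close> is followed by a value
  lying between the images of \<open>1\<close> and \<open>2\<close>; \<open>append_2\<close> records this relative order.\<close>

definition append_2 :: "nat list \<Rightarrow> nat list" where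
  "append_2 w = map lift_above_1 w @ [2]"

definition lds_one_line :: "nat list \<Rightarrow> nat" where
  "lds_one_line c = lds (cycle_one_line c)"

definition lds_rotated :: "nat list \<Rightarrow> nat" where
  "lds_rotated c = lds (rotate1 (cycle_one_line c))"

definition lds_one_line_2 :: "nat list \<Rightarrow> nat" where
  "lds_one_line_2 c = lds (append_2 (cycle_one_line c))"

definition lds_rotated_2 :: "nat list \<Rightarrow> nat" where
  "lds_rotated_2 c = lds (append_2 (rotate1 (cycle_one_line c)))"

lemma filter_map_eq_singleton:
  assumes "distinct l" "x \<in> set l" "\<forall>v\<in>set l. P (h v) \<longleftrightarrow> v = x"
  shows "filter P (map h l) = [h x]"
proof -
  have "filter (P \<circ> h) l = filter (\<lambda>v. v = x) l"
    using assms(3) by (intro filter_cong) auto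
  also have "\<dots> = [x]"
    using assms(1,2) by (induction l) (auto simp: filter_empty_conv)
  finally show ?thesis by (simp add: filter_map)
qed

lemma lds_one_line_relabel:
  assumes "X \<in> cycle_forms_213 m" "1 \<le> m" "\<forall>v w. 1 \<le> v \<longrightarrow> v < w \<longrightarrow> h v < h w"
  shows "lds (map h (cycle_one_line X)) = lds_one_line X"
  unfolding lds_one_line_def using assms cycle_one_line_props(2)[OF assms(1,2)]
  by (intro lds_map_strict_mono) (auto simp: strict_mono_on_def)

lemma lds_one_line_2_relabel:
  assumes "X \<in> cycle_forms_213 m" "1 \<le> m" "p < q" "q < 3 + r"
  shows "lds (map (\<lambda>v. if v = 1 then p else v + 1 + r) (cycle_one_line X) @ [q]) = lds_one_line_2 X"
proof -
  define h where "h w = (if w = 1 then p else if w = 2 then q else w + r)" for w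
  have set_X: "set (cycle_one_line X) = {1..m}" by (rule cycle_one_line_props(2)[OF assms(1,2)])
  have "map (\<lambda>v. if v = 1 then p else v + 1 + r) (cycle_one_line X) @ [q] = map h (append_2 (cycle_one_line X))"
    using set_X by (auto simp: append_2_def h_def lift_above_1_def)
  also have "lds \<dots> = lds_one_line_2 X"
    unfolding lds_one_line_2_def using assms(3,4) set_X
    by (intro lds_map_strict_mono) (auto simp: strict_mono_on_def h_def append_2_def lift_above_1_def)
  finally show ?thesis .
qed

lemma lds_one_line_2_pos: "1 \<le> lds_one_line_2 X"
  unfolding lds_one_line_2_def append_2_def by (rule lds_pos) simp

lemma lds_rotated_pos: "X \<in> cycle_forms_213 m \<Longrightarrow> 1 \<le> m \<Longrightarrow> 1 \<le> lds_rotated X"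
  unfolding lds_rotated_def using cycle_one_line_props(4) by (intro lds_pos) simp

lemma lds_statistics_singleton: "lds_one_line [1] = 1" "lds_rotated [1] = 1" "lds_one_line_2 [1] = 1"
proof -
  have "cycle_one_line [1] = [1]" by (simp add: cycle_one_line_def one_line_def)
  then show "lds_one_line [1] = 1" "lds_rotated [1] = 1" "lds_one_line_2 [1] = 1"
    unfolding lds_one_line_def lds_rotated_def lds_one_line_2_def append_2_def
    by (simp_all add: lift_above_1_def lds_increasing_pair)
qed

context
  fixes A B :: "nat list" and m1 m2 :: nat
  assumes A: "A \<in> cycle_forms_213 m1" and B: "B \<in> cycle_forms_213 m2" and m1: "1 \<le> m1" and m2: "1 \<le> m2"
begin

lemma join_one_line_facts:
  defines "hb \<equiv> hd (cycle_one_line B)"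
  shows "set (cycle_one_line A) = {1..m1}" "distinct (cycle_one_line A)" "hb \<in> {1..m2}"
    "\<forall>x\<in>set (tl (cycle_one_line B)). 1 \<le> x \<and> x \<le> m2"
    "rotate1 (cycle_one_line B) = tl (cycle_one_line B) @ [hb]"
    "cycle_one_line (cycle_join m2 A B) = Suc m2 # tl (cycle_one_line B) @ map (join_label hb m2) (cycle_one_line A)"
    "rotate1 (cycle_one_line (cycle_join m2 A B)) =
      tl (cycle_one_line B) @ map (join_label hb m2) (cycle_one_line A) @ [Suc m2]"
    "filter (\<lambda>y. y < Suc m2) (map (join_label hb m2) (cycle_one_line A)) = [hb]"
    "\<forall>v w. 1 \<le> v \<longrightarrow> v < w \<longrightarrow> join_label hb m2 v < join_label hb m2 w"
proof -
  note OA = cycle_one_line_props[OF A m1] and OB = cycle_one_line_props[OF B m2]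
  show set_A: "set (cycle_one_line A) = {1..m1}" and "distinct (cycle_one_line A)" by (fact OA(2), fact OA(3))
  have "hb \<in> set (cycle_one_line B)" unfolding hb_def using OB(4) by simp
  then show hb: "hb \<in> {1..m2}" using OB(2) by simp
  have "set (tl (cycle_one_line B)) \<subseteq> set (cycle_one_line B)" by (simp add: list.set_sel(2) subsetI OB(4))
  then show "\<forall>x\<in>set (tl (cycle_one_line B)). 1 \<le> x \<and> x \<le> m2" using OB(2) by auto
  show "rotate1 (cycle_one_line B) = tl (cycle_one_line B) @ [hb]"
    unfolding hb_def using OB(4) by (rule rotate1_hd_tl)
  show ol: "cycle_one_line (cycle_join m2 A B) = Suc m2 # tl (cycle_one_line B) @ map (join_label hb m2) (cycle_one_line A)"
    unfolding hb_def by (rule cycle_one_line_join[OF A B m1 m2])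
  then show "rotate1 (cycle_one_line (cycle_join m2 A B)) =
      tl (cycle_one_line B) @ map (join_label hb m2) (cycle_one_line A) @ [Suc m2]"
    by simp
  have "filter (\<lambda>y. y < Suc m2) (map (join_label hb m2) (cycle_one_line A)) = [join_label hb m2 1]"
    using OA(3) set_A m1 hb by (intro filter_map_eq_singleton) (auto simp: join_label_def)
  then show "filter (\<lambda>y. y < Suc m2) (map (join_label hb m2) (cycle_one_line A)) = [hb]"
    by (simp add: join_label_def)
  show "\<forall>v w. 1 \<le> v \<longrightarrow> v < w \<longrightarrow> join_label hb m2 v < join_label hb m2 w"
    using hb by (auto simp: join_label_def)
qed

lemma lds_one_line_join: "lds_one_line (cycle_join m2 A B) = max (lds_one_line A) (Suc (lds_rotated B))"
proof -
  define hb where "hb = hd (cycle_one_line B)"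
  note F = join_one_line_facts[folded hb_def]
  let ?t = "join_label hb m2"
  have "lds_one_line (cycle_join m2 A B) = lds ((Suc m2 # tl (cycle_one_line B)) @ map ?t (cycle_one_line A))"
    unfolding lds_one_line_def F(6) by simp
  also have "\<dots> = max (lds (map ?t (cycle_one_line A)))
      (lds ((Suc m2 # tl (cycle_one_line B)) @ filter (\<lambda>y. y < Suc m2) (map ?t (cycle_one_line A))))"
  proof (rule lds_append_filter)
    show "\<forall>y\<in>set (map ?t (cycle_one_line A)). \<not> y < Suc m2 \<longrightarrow> (\<forall>x\<in>set (Suc m2 # tl (cycle_one_line B)). x < y)"
    proof (intro ballI impI)
      fix y x assume y: "y \<in> set (map ?t (cycle_one_line A))" and ny: "\<not> y < Suc m2"
        and x: "x \<in> set (Suc m2 # tl (cycle_one_line B))"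
      obtain v where v: "v \<in> set (cycle_one_line A)" "y = ?t v" using y by auto
      have "v \<noteq> 1" using v ny F(3) by (auto simp: join_label_def)
      then have "Suc (Suc m2) \<le> y" using v F(1) by (auto simp: join_label_def)
      moreover have "x \<le> Suc m2" using x F(4) by auto
      ultimately show "x < y" by simp
    qed
  qed
  also have "filter (\<lambda>y. y < Suc m2) (map ?t (cycle_one_line A)) = [hb]" by (rule F(8))
  also have "lds ((Suc m2 # tl (cycle_one_line B)) @ [hb]) = Suc (lds (tl (cycle_one_line B) @ [hb]))"
    using lds_Cons_greater[of "tl (cycle_one_line B) @ [hb]" "Suc m2"] F(3) F(4) by fastforce
  also have "tl (cycle_one_line B) @ [hb] = rotate1 (cycle_one_line B)" using F(5) by simp
  also have "lds (map ?t (cycle_one_line A)) = lds_one_line A" by (rule lds_one_line_relabel[OF A m1 F(9)])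
  finally show ?thesis unfolding lds_rotated_def .
qed

lemma lds_rotated_join: "lds_rotated (cycle_join m2 A B) = max (lds_one_line_2 A) (lds_rotated B)"
proof -
  define hb where "hb = hd (cycle_one_line B)"
  note F = join_one_line_facts[folded hb_def]
  let ?t = "join_label hb m2"
  have "lds_rotated (cycle_join m2 A B) = lds (tl (cycle_one_line B) @ (map ?t (cycle_one_line A) @ [Suc m2]))"
    unfolding lds_rotated_def F(7) by simp
  also have "\<dots> = max (lds (map ?t (cycle_one_line A) @ [Suc m2]))
      (lds (tl (cycle_one_line B) @ filter (\<lambda>y. y < Suc m2) (map ?t (cycle_one_line A) @ [Suc m2])))"
    by (rule lds_append_filter) (use F(4) in fastforce)
  also have "filter (\<lambda>y. y < Suc m2) (map ?t (cycle_one_line A) @ [Suc m2]) = [hb]" using F(8) by simp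
  also have "tl (cycle_one_line B) @ [hb] = rotate1 (cycle_one_line B)" using F(5) by simp
  also have "map ?t (cycle_one_line A) = map (\<lambda>v. if v = 1 then hb else v + 1 + (m2 - 1)) (cycle_one_line A)"
    using m2 by (intro map_cong) (auto simp: join_label_def)
  also have "lds (map (\<lambda>v. if v = 1 then hb else v + 1 + (m2 - 1)) (cycle_one_line A) @ [Suc m2]) = lds_one_line_2 A"
    by (rule lds_one_line_2_relabel[OF A m1]) (use F(3) m2 in auto)
  finally show ?thesis unfolding lds_rotated_def .
qed

lemma lds_one_line_2_join:
  assumes "2 \<le> m2"
  shows "lds_one_line_2 (cycle_join m2 A B) = Suc (max (lds_one_line A) (lds_rotated_2 B))"
proof -
  define hb where "hb = hd (cycle_one_line B)"
  note F = join_one_line_facts[folded hb_def]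
  have hb2: "2 \<le> hb" unfolding hb_def using hd_cycle_one_line_ge_2[OF B assms] .
  let ?t = "join_label hb m2"
  let ?s = "\<lambda>v. lift_above_1 (?t v)"
  have lift_m2: "lift_above_1 (Suc m2) = Suc (Suc m2)" using assms by (simp add: lift_above_1_def)
  have "lds_one_line_2 (cycle_join m2 A B) =
      lds ((Suc (Suc m2) # map lift_above_1 (tl (cycle_one_line B))) @ (map ?s (cycle_one_line A) @ [2]))"
    unfolding lds_one_line_2_def append_2_def F(6) using lift_m2 by (simp add: comp_def)
  also have "\<dots> = max (lds (map ?s (cycle_one_line A) @ [2]))
      (lds ((Suc (Suc m2) # map lift_above_1 (tl (cycle_one_line B))) @
        filter (\<lambda>y. y < Suc (Suc m2)) (map ?s (cycle_one_line A) @ [2])))"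
  proof (rule lds_append_filter)
    show "\<forall>y\<in>set (map ?s (cycle_one_line A) @ [2]). \<not> y < Suc (Suc m2) \<longrightarrow>
            (\<forall>x\<in>set (Suc (Suc m2) # map lift_above_1 (tl (cycle_one_line B))). x < y)"
    proof (intro ballI impI)
      fix y x assume y: "y \<in> set (map ?s (cycle_one_line A) @ [2])" and ny: "\<not> y < Suc (Suc m2)"
        and x: "x \<in> set (Suc (Suc m2) # map lift_above_1 (tl (cycle_one_line B)))"
      have "y \<noteq> 2" using ny assms by auto
      then obtain v where v: "v \<in> set (cycle_one_line A)" "y = ?s v" using y by auto
      have "v \<noteq> 1" using v ny F(3) by (auto simp: join_label_def lift_above_1_def split: if_splits)
      then have "Suc (Suc (Suc m2)) \<le> y" using v F(1) by (auto simp: join_label_def lift_above_1_def)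
      moreover have "x \<le> Suc (Suc m2)" using x F(4) by (auto simp: lift_above_1_def)
      ultimately show "x < y" by simp
    qed
  qed
  also have "filter (\<lambda>y. y < Suc (Suc m2)) (map ?s (cycle_one_line A) @ [2]) = [lift_above_1 hb, 2]"
  proof -
    have "filter (\<lambda>y. y < Suc (Suc m2)) (map ?s (cycle_one_line A)) = [?s 1]"
      using F(1-3) m1 by (intro filter_map_eq_singleton) (auto simp: join_label_def lift_above_1_def)
    then show ?thesis using assms by (simp add: join_label_def)
  qed
  also have "lds ((Suc (Suc m2) # map lift_above_1 (tl (cycle_one_line B))) @ [lift_above_1 hb, 2]) =
      Suc (lds (map lift_above_1 (tl (cycle_one_line B)) @ [lift_above_1 hb, 2]))"
  proof -
    have "\<forall>y\<in>set (map lift_above_1 (tl (cycle_one_line B)) @ [lift_above_1 hb, 2]). y < Suc (Suc m2)"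
      using F(3) F(4) assms by (auto simp: lift_above_1_def)
    then show ?thesis by (simp add: lds_Cons_greater)
  qed
  also have "map lift_above_1 (tl (cycle_one_line B)) @ [lift_above_1 hb, 2] = append_2 (rotate1 (cycle_one_line B))"
    using F(5) by (simp add: append_2_def)
  also have "lds (map ?s (cycle_one_line A) @ [2]) = Suc (lds (map ?s (cycle_one_line A)))"
    by (rule lds_snoc_less) (use F(1) hb2 in \<open>auto simp: join_label_def lift_above_1_def\<close>)
  also have "lds (map ?s (cycle_one_line A)) = lds_one_line A"
    by (rule lds_one_line_relabel[OF A m1]) (use F(9) strict_monoD[OF strict_mono_lift_above_1] in blast)
  finally show ?thesis unfolding lds_rotated_2_def by simp
qed

lemma lds_rotated_2_join:
  assumes "2 \<le> m2"
  shows "lds_rotated_2 (cycle_join m2 A B) = max (Suc (lds_one_line_2 A)) (lds_rotated_2 B)"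
proof -
  define hb where "hb = hd (cycle_one_line B)"
  note F = join_one_line_facts[folded hb_def]
  have hb2: "2 \<le> hb" unfolding hb_def using hd_cycle_one_line_ge_2[OF B assms] .
  let ?t = "join_label hb m2"
  let ?s = "\<lambda>v. lift_above_1 (?t v)"
  have lift_m2: "lift_above_1 (Suc m2) = Suc (Suc m2)" using assms by (simp add: lift_above_1_def)
  have "lds_rotated_2 (cycle_join m2 A B) =
      lds (map lift_above_1 (tl (cycle_one_line B)) @ (map ?s (cycle_one_line A) @ [Suc (Suc m2), 2]))"
    unfolding lds_rotated_2_def append_2_def F(7) using lift_m2 by (simp add: comp_def)
  also have "\<dots> = max (lds (map ?s (cycle_one_line A) @ [Suc (Suc m2), 2]))
      (lds (map lift_above_1 (tl (cycle_one_line B)) @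
        filter (\<lambda>y. y < Suc (Suc m2)) (map ?s (cycle_one_line A) @ [Suc (Suc m2), 2])))"
  proof (rule lds_append_filter)
    show "\<forall>y\<in>set (map ?s (cycle_one_line A) @ [Suc (Suc m2), 2]). \<not> y < Suc (Suc m2) \<longrightarrow>
            (\<forall>x\<in>set (map lift_above_1 (tl (cycle_one_line B))). x < y)"
      using F(4) by (fastforce simp: lift_above_1_def)
  qed
  also have "filter (\<lambda>y. y < Suc (Suc m2)) (map ?s (cycle_one_line A) @ [Suc (Suc m2), 2]) = [lift_above_1 hb, 2]"
  proof -
    have "filter (\<lambda>y. y < Suc (Suc m2)) (map ?s (cycle_one_line A)) = [?s 1]"
      using F(1-3) m1 by (intro filter_map_eq_singleton) (auto simp: join_label_def lift_above_1_def)
    then show ?thesis using assms by (simp add: join_label_def)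
  qed
  also have "map lift_above_1 (tl (cycle_one_line B)) @ [lift_above_1 hb, 2] = append_2 (rotate1 (cycle_one_line B))"
    using F(5) by (simp add: append_2_def)
  also have "lds (map ?s (cycle_one_line A) @ [Suc (Suc m2), 2]) =
      Suc (lds (map ?s (cycle_one_line A) @ [Suc (Suc m2)]))"
  proof -
    have "\<forall>y\<in>set (map ?s (cycle_one_line A) @ [Suc (Suc m2)]). 2 < y"
      using F(1) hb2 assms by (auto simp: join_label_def lift_above_1_def)
    then show ?thesis using lds_snoc_less[of "map ?s (cycle_one_line A) @ [Suc (Suc m2)]" 2] by simp
  qed
  also have "map ?s (cycle_one_line A) = map (\<lambda>v. if v = 1 then Suc hb else v + 1 + m2) (cycle_one_line A)"
    using hb2 F(1) assms by (intro map_cong) (auto simp: join_label_def lift_above_1_def)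
  also have "lds (map (\<lambda>v. if v = 1 then Suc hb else v + 1 + m2) (cycle_one_line A) @ [Suc (Suc m2)]) = lds_one_line_2 A"
    by (rule lds_one_line_2_relabel[OF A m1]) (use F(3) in auto)
  finally show ?thesis unfolding lds_rotated_2_def by simp
qed

lemma lds_one_line_2_join_1:
  assumes "m2 = 1"
  shows "lds_one_line_2 (cycle_join m2 A B) = max (lds_one_line_2 A) 2"
proof -
  note F = join_one_line_facts
  have B1: "cycle_one_line B = [1]" using B assms by (simp add: cycle_one_line_1)
  let ?s = "\<lambda>v. lift_above_1 (join_label 1 1 v)"
  have ol: "cycle_one_line (cycle_join m2 A B) = 2 # map (join_label 1 1) (cycle_one_line A)"
    using F(6) B1 assms by simp
  have "lds_one_line_2 (cycle_join m2 A B) = lds ([3] @ (map ?s (cycle_one_line A) @ [2]))"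
    unfolding lds_one_line_2_def append_2_def ol by (simp add: lift_above_1_def comp_def)
  also have "\<dots> = max (lds (map ?s (cycle_one_line A) @ [2]))
      (lds ([3] @ filter (\<lambda>y. y < 3) (map ?s (cycle_one_line A) @ [2])))"
  proof (rule lds_append_filter)
    show "\<forall>y\<in>set (map ?s (cycle_one_line A) @ [2]). \<not> y < 3 \<longrightarrow> (\<forall>x\<in>set [3]. x < y)"
      using F(1) by (auto simp: join_label_def lift_above_1_def)
  qed
  also have "filter (\<lambda>y. y < 3) (map ?s (cycle_one_line A) @ [2]) = [1, 2]"
  proof -
    have "filter (\<lambda>y. y < 3) (map ?s (cycle_one_line A)) = [?s 1]"
      using F(1,2) m1 by (intro filter_map_eq_singleton) (auto simp: join_label_def lift_above_1_def)
    then show ?thesis by (simp add: join_label_def lift_above_1_def)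
  qed
  also have "lds ([3] @ [1, 2 :: nat]) = 2"
    using lds_Cons_greater[of "[1, 2]" "3 :: nat"] lds_increasing_pair[of "1 :: nat" 2] by simp
  also have "map ?s (cycle_one_line A) = map (\<lambda>v. if v = 1 then 1 else v + 1 + 1) (cycle_one_line A)"
    using F(1) by (intro map_cong) (auto simp: join_label_def lift_above_1_def)
  also have "lds (map (\<lambda>v. if v = 1 then 1 else v + 1 + 1) (cycle_one_line A) @ [2]) = lds_one_line_2 A"
    by (rule lds_one_line_2_relabel[OF A m1]) auto
  finally show ?thesis .
qed

lemma lds_rotated_2_join_1:
  assumes "m2 = 1"
  shows "lds_rotated_2 (cycle_join m2 A B) = Suc (lds_one_line_2 A)"
proof -
  note F = join_one_line_facts
  have B1: "cycle_one_line B = [1]" using B assms by (simp add: cycle_one_line_1)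
  let ?s = "\<lambda>v. lift_above_1 (join_label 1 1 v)"
  have rot: "rotate1 (cycle_one_line (cycle_join m2 A B)) = map (join_label 1 1) (cycle_one_line A) @ [2]"
    using F(7) B1 assms by simp
  have "lds_rotated_2 (cycle_join m2 A B) = lds (map ?s (cycle_one_line A) @ [3, 2])"
    unfolding lds_rotated_2_def append_2_def rot by (simp add: lift_above_1_def comp_def)
  also have "\<dots> = Suc (lds (map ?s (cycle_one_line A) @ [3]))"
  proof (rule lds_append_descent)
    show "\<forall>z\<in>set (map ?s (cycle_one_line A)). 3 < z \<or> z < 2"
      using F(1) by (auto simp: join_label_def lift_above_1_def)
    show "\<forall>z\<in>set (map ?s (cycle_one_line A)). \<forall>z'\<in>set (map ?s (cycle_one_line A)). z < 2 \<longrightarrow> z' < 2 \<longrightarrow> z = z'"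
      using F(1) by (auto simp: join_label_def lift_above_1_def)
  qed simp
  also have "map ?s (cycle_one_line A) = map (\<lambda>v. if v = 1 then 1 else v + 1 + 1) (cycle_one_line A)"
    using F(1) by (intro map_cong) (auto simp: join_label_def lift_above_1_def)
  also have "lds (map (\<lambda>v. if v = 1 then 1 else v + 1 + 1) (cycle_one_line A) @ [3]) = lds_one_line_2 A"
    by (rule lds_one_line_2_relabel[OF A m1]) auto
  finally show ?thesis .
qed

end

lemma lds_one_line_2_ge_2:
  assumes "c \<in> cycle_forms_213 m" "2 \<le> m"
  shows "2 \<le> lds_one_line_2 c"
proof -
  have "2 \<in> set (cycle_one_line c)" using cycle_one_line_props(2)[OF assms(1)] assms(2) by simp
  then have "subseq [3] (map lift_above_1 (cycle_one_line c))"
    by (auto simp: lift_above_1_def subseq_singleton_left intro: rev_image_eqI)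
  then have "subseq ([3] @ [2]) (append_2 (cycle_one_line c))"
    unfolding append_2_def by (rule list_emb_append_mono) simp
  then show ?thesis
    unfolding lds_one_line_2_def using length_le_lds[of "[3, 2 :: nat]" "append_2 (cycle_one_line c)"] by simp
qed

lemma lds_rotated_2_eq:
  assumes "c \<in> cycle_forms_213 m" "2 \<le> m"
  shows "lds_rotated_2 c = Suc (lds_rotated c)"
  using assms
proof (induction m arbitrary: c rule: less_induct)
  case (less m)
  obtain m2 A B where m2: "1 \<le> m2" "m2 < m" and A: "A \<in> cycle_forms_213 (m - m2)"
    and B: "B \<in> cycle_forms_213 m2" and c: "c = cycle_join m2 A B"
    using cycle_forms_213_decompose[OF less.prems] by blast
  have m1: "1 \<le> m - m2" using m2 by simp
  show ?case
  proof (cases "m2 = 1")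
    case True
    then have "lds_rotated B = 1" using B cycle_forms_213_1 lds_statistics_singleton by auto
    then show ?thesis
      using lds_rotated_2_join_1[OF A B m1 m2(1) True] lds_rotated_join[OF A B m1 m2(1)] lds_one_line_2_pos[of A] c
      by simp
  next
    case False
    then have "2 \<le> m2" using m2 by simp
    then show ?thesis
      using lds_rotated_2_join[OF A B m1 m2(1)] lds_rotated_join[OF A B m1 m2(1)] less.IH[OF m2(2) B] c
      by simp
  qed
qed

text \<open>The second alternative only occurs for the cycle forms \<open>[1, 2, ..., n]\<close>.\<close>

lemma lds_one_line_2_cases:
  assumes "c \<in> cycle_forms_213 m" "1 \<le> m"
  shows "lds_one_line_2 c = Suc (lds_one_line c) \<or> lds_one_line_2 c \<le> 2 \<and> lds_one_line c \<le> 2"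
  using assms
proof (induction m arbitrary: c rule: less_induct)
  case (less m)
  show ?case
  proof (cases "m = 1")
    case True
    then show ?thesis using less.prems(1) cycle_forms_213_1 lds_statistics_singleton by auto
  next
    case False
    then have "2 \<le> m" using less.prems by simp
    then obtain m2 A B where m2: "1 \<le> m2" "m2 < m" and A: "A \<in> cycle_forms_213 (m - m2)"
      and B: "B \<in> cycle_forms_213 m2" and c: "c = cycle_join m2 A B"
      using cycle_forms_213_decompose[OF less.prems(1)] by blast
    have m1: "1 \<le> m - m2" using m2 by simp
    note ol = lds_one_line_join[OF A B m1 m2(1)]
    show ?thesis
    proof (cases "m2 = 1")
      case True
      then have "lds_rotated B = 1" using B cycle_forms_213_1 lds_statistics_singleton by auto
      then show ?thesis
        using ol lds_one_line_2_join_1[OF A B m1 m2(1) True] less.IH[of "m - m2" A] A m1 m2 c by auto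
    next
      case False
      then have "2 \<le> m2" using m2 by simp
      then show ?thesis
        using ol lds_one_line_2_join[OF A B m1 m2(1)] lds_rotated_2_eq[OF B] c by simp
    qed
  qed
qed

section \<open>Counting\<close>

definition count_below :: "(nat list \<Rightarrow> nat) \<Rightarrow> nat \<Rightarrow> nat \<Rightarrow> nat" where
  "count_below f n j = card {c \<in> cycle_forms_213 n. f c < j}"

lemma card_pairs_split:
  assumes "\<forall>A\<in>S. \<forall>B\<in>T. Q A B \<longleftrightarrow> P A \<and> R B"
  shows "card {(A, B). A \<in> S \<and> B \<in> T \<and> Q A B} = card {A \<in> S. P A} * card {B \<in> T. R B}"
proof -
  have "{(A, B). A \<in> S \<and> B \<in> T \<and> Q A B} = {A \<in> S. P A} \<times> {B \<in> T. R B}" using assms by auto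
  then show ?thesis by (simp add: card_cartesian_product)
qed

lemma count_below_1: "count_below f 1 j = (if f [1] < j then 1 else 0)"
proof -
  have "{c \<in> cycle_forms_213 1. f c < j} = (if f [1] < j then {[1]} else {})"
    unfolding cycle_forms_213_1 by auto
  then show ?thesis unfolding count_below_def by simp
qed

lemma count_lds_one_line_rec:
  assumes "2 \<le> n"
  shows "count_below lds_one_line n j = (\<Sum>m = 1..n-1. count_below lds_one_line (n - m) j * count_below lds_rotated m (j - 1))"
  unfolding count_below_def card_cycle_forms_213_decompose[OF assms]
proof (rule sum.cong)
  fix m assume m: "m \<in> {1..n-1}"
  then have "1 \<le> n - m" "1 \<le> m" by auto
  then show "card {(A, B). A \<in> cycle_forms_213 (n - m) \<and> B \<in> cycle_forms_213 m \<and> lds_one_line (cycle_join m A B) < j} =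
      card {c \<in> cycle_forms_213 (n - m). lds_one_line c < j} * card {c \<in> cycle_forms_213 m. lds_rotated c < j - 1}"
    by (intro card_pairs_split) (auto simp: lds_one_line_join)
qed simp

lemma count_lds_rotated_rec:
  assumes "2 \<le> n"
  shows "count_below lds_rotated n j = (\<Sum>m = 1..n-1. count_below lds_one_line_2 (n - m) j * count_below lds_rotated m j)"
  unfolding count_below_def card_cycle_forms_213_decompose[OF assms]
proof (rule sum.cong)
  fix m assume m: "m \<in> {1..n-1}"
  then have "1 \<le> n - m" "1 \<le> m" by auto
  then show "card {(A, B). A \<in> cycle_forms_213 (n - m) \<and> B \<in> cycle_forms_213 m \<and> lds_rotated (cycle_join m A B) < j} =
      card {c \<in> cycle_forms_213 (n - m). lds_one_line_2 c < j} * card {c \<in> cycle_forms_213 m. lds_rotated c < j}"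
    by (intro card_pairs_split) (auto simp: lds_rotated_join)
qed simp

lemma count_lds_one_line_2_shift:
  assumes "1 \<le> m" "4 \<le> j"
  shows "count_below lds_one_line_2 m j = count_below lds_one_line m (j - 1)"
proof -
  have "lds_one_line_2 c < j \<longleftrightarrow> lds_one_line c < j - 1" if "c \<in> cycle_forms_213 m" for c
    using lds_one_line_2_cases[OF that assms(1)] assms(2) by auto
  then show ?thesis unfolding count_below_def by (metis (no_types, lifting) Collect_cong)
qed

lemma count_lds_one_line_2_2:
  assumes "1 \<le> m"
  shows "count_below lds_one_line_2 m 2 = (if m = 1 then 1 else 0)"
proof (cases "m = 1")
  case False
  then have empty: "{c \<in> cycle_forms_213 m. lds_one_line_2 c < 2} = {}"
    using lds_one_line_2_ge_2 assms by fastforce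
  show ?thesis using False unfolding count_below_def empty by simp
next
  case True
  then show ?thesis using count_below_1[of lds_one_line_2 2] lds_statistics_singleton by simp
qed

lemma count_lds_rotated_2:
  assumes "1 \<le> n"
  shows "count_below lds_rotated n 2 = 1"
  using assms
proof (induction n rule: less_induct)
  case (less n)
  show ?case
  proof (cases "n = 1")
    case False
    then have n: "2 \<le> n" using less.prems by simp
    have "count_below lds_rotated n 2 = (\<Sum>m = 1..n-1. if m = n - 1 then 1 else 0)"
      unfolding count_lds_rotated_rec[OF n]
    proof (rule sum.cong)
      fix m assume m: "m \<in> {1..n-1}"
      then have "count_below lds_rotated m 2 = 1" using less.IH[of m] n by force
      moreover have "count_below lds_one_line_2 (n - m) 2 = (if n - m = 1 then 1 else 0)"
        using m by (intro count_lds_one_line_2_2) auto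
      ultimately show "count_below lds_one_line_2 (n - m) 2 * count_below lds_rotated m 2 = (if m = n - 1 then 1 else 0)"
        using m by auto
    qed simp
    also have "\<dots> = 1" using n by (simp add: sum.delta)
    finally show ?thesis .
  next
    case True
    then show ?thesis using count_below_1[of lds_rotated 2] lds_statistics_singleton by simp
  qed
qed

lemma count_lds_one_line_2_3:
  assumes "1 \<le> m"
  shows "count_below lds_one_line_2 m 3 = 1"
  using assms
proof (induction m rule: less_induct)
  case (less m)
  show ?case
  proof (cases "m = 1")
    case False
    then have n: "2 \<le> m" using less.prems by simp
    have "count_below lds_one_line_2 m 3 =
        (\<Sum>m2 = 1..m-1. card {(A, B). A \<in> cycle_forms_213 (m - m2) \<and> B \<in> cycle_forms_213 m2 \<and>
          lds_one_line_2 (cycle_join m2 A B) < 3})"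
      unfolding count_below_def by (rule card_cycle_forms_213_decompose[OF n])
    also have "\<dots> = (\<Sum>m2 = 1..m-1. if m2 = 1 then 1 else 0)"
    proof (rule sum.cong)
      fix m2 assume m2: "m2 \<in> {1..m-1}"
      then have m1: "1 \<le> m - m2" and m2': "1 \<le> m2" by auto
      show "card {(A, B). A \<in> cycle_forms_213 (m - m2) \<and> B \<in> cycle_forms_213 m2 \<and>
          lds_one_line_2 (cycle_join m2 A B) < 3} = (if m2 = 1 then 1 else 0)"
      proof (cases "m2 = 1")
        case True
        then have "card {(A, B). A \<in> cycle_forms_213 (m - m2) \<and> B \<in> cycle_forms_213 m2 \<and>
            lds_one_line_2 (cycle_join m2 A B) < 3} = count_below lds_one_line_2 (m - m2) 3 * card {B \<in> cycle_forms_213 m2. True}"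
          unfolding count_below_def using m1 by (intro card_pairs_split) (auto simp: lds_one_line_2_join_1)
        moreover have "{B \<in> cycle_forms_213 m2. True} = {[1]}" using True cycle_forms_213_1 by simp
        ultimately show ?thesis using less.IH[of "m - m2"] m1 m2' True by simp
      next
        case False
        then have "2 \<le> m2" using m2' by simp
        have "3 \<le> lds_one_line_2 (cycle_join m2 A B)"
          if "A \<in> cycle_forms_213 (m - m2)" "B \<in> cycle_forms_213 m2" for A B
          using lds_one_line_2_join[OF that m1 m2' \<open>2 \<le> m2\<close>] lds_rotated_2_eq[OF that(2) \<open>2 \<le> m2\<close>]
            lds_rotated_pos[OF that(2) m2'] by simp
        then have empty: "{(A, B). A \<in> cycle_forms_213 (m - m2) \<and> B \<in> cycle_forms_213 m2 \<and>
            lds_one_line_2 (cycle_join m2 A B) < 3} = {}" by fastforce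
        show ?thesis unfolding empty using False by simp
      qed
    qed simp
    also have "\<dots> = 1" using n by (simp add: sum.delta)
    finally show ?thesis .
  next
    case True
    then show ?thesis using count_below_1[of lds_one_line_2 3] lds_statistics_singleton by simp
  qed
qed

lemma sum_reflect:
  fixes f :: "nat \<Rightarrow> nat \<Rightarrow> 'a::comm_monoid_add"
  shows "(\<Sum>m = 1..n-1. f (n - m) m) = (\<Sum>m = 1..n-1. f m (n - m))"
  by (rule sum.reindex_bij_witness[of _ "\<lambda>i. n - i" "\<lambda>i. n - i"]) auto

lemma count_lds_one_line_eq_count_lds_rotated:
  assumes "3 \<le> j" "1 \<le> n"
  shows "count_below lds_one_line n j = count_below lds_rotated n j"
  using assms
proof (induction n arbitrary: j rule: less_induct)
  case (less n)
  show ?case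
  proof (cases "n = 1")
    case True
    then show ?thesis using less.prems count_below_1 lds_statistics_singleton by simp
  next
    case False
    then have n: "2 \<le> n" using less.prems by simp
    have count_2_eq_count_rotated: "count_below lds_one_line_2 i j = count_below lds_rotated i (j - 1)" if "1 \<le> i" "i < n" for i
    proof (cases "j = 3")
      case True
      then show ?thesis using count_lds_one_line_2_3 count_lds_rotated_2 that by simp
    next
      case False
      then have "4 \<le> j" using less.prems by simp
      then show ?thesis using count_lds_one_line_2_shift less.IH[of i "j - 1"] that by simp
    qed
    have "count_below lds_rotated n j = (\<Sum>m = 1..n-1. count_below lds_one_line_2 (n - m) j * count_below lds_rotated m j)"
      by (rule count_lds_rotated_rec[OF n])
    also have "\<dots> = (\<Sum>m = 1..n-1. count_below lds_rotated (n - m) (j - 1) * count_below lds_one_line m j)"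
      using count_2_eq_count_rotated less.IH less.prems by (intro sum.cong) auto
    also have "\<dots> = (\<Sum>m = 1..n-1. count_below lds_one_line (n - m) j * count_below lds_rotated m (j - 1))"
      using sum_reflect[of "\<lambda>i m. count_below lds_rotated i (j - 1) * count_below lds_one_line m j" n]
      by (simp add: mult.commute)
    also have "\<dots> = count_below lds_one_line n j" by (rule count_lds_one_line_rec[OF n, symmetric])
    finally show ?thesis by simp
  qed
qed

lemma count_lds_one_line_3:
  assumes "2 \<le> n"
  shows "count_below lds_one_line n 3 = 2 ^ (n - 2)"
proof -
  have sum: "count_below lds_one_line n 3 = (\<Sum>i = 1..n-1. count_below lds_one_line i 3)" if "2 \<le> n" for n
  proof -
    have "count_below lds_one_line n 3 = (\<Sum>m = 1..n-1. count_below lds_one_line (n - m) 3)"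
      unfolding count_lds_one_line_rec[OF that] using count_lds_rotated_2 by (intro sum.cong) auto
    then show ?thesis using sum_reflect[of "\<lambda>i m. count_below lds_one_line i 3" n] by simp
  qed
  from assms show ?thesis
  proof (induction n rule: nat_induct_at_least)
    case base
    then show ?case using sum[of 2] count_below_1 lds_statistics_singleton by simp
  next
    case (Suc n)
    have "{1..n} = insert n {1..n-1}" "n \<notin> {1..n-1}" using Suc.hyps by auto
    then have "count_below lds_one_line (Suc n) 3 = (\<Sum>i = 1..n-1. count_below lds_one_line i 3) + count_below lds_one_line n 3"
      using sum[of "Suc n"] Suc.hyps by (simp add: add.commute)
    also have "(\<Sum>i = 1..n-1. count_below lds_one_line i 3) = count_below lds_one_line n 3"
      using sum[OF Suc.hyps] by simp
    also have "count_below lds_one_line n 3 + count_below lds_one_line n 3 = 2 ^ (Suc n - 2)"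
    proof -
      have "Suc n - 2 = Suc (n - 2)" using Suc.hyps by simp
      then show ?thesis using Suc.IH by (simp only: power_Suc mult_2)
    qed
    finally show ?case .
  qed
qed

lemma count_lds_one_line_le_2:
  assumes "2 \<le> n" "j \<le> 2"
  shows "count_below lds_one_line n j = 0"
proof -
  have "count_below lds_rotated m (j - 1) = 0" if "1 \<le> m" for m
  proof -
    have empty: "{c \<in> cycle_forms_213 m. lds_rotated c < j - 1} = {}"
      using lds_rotated_pos[OF _ that] assms(2) by force
    show ?thesis unfolding count_below_def empty by simp
  qed
  then show ?thesis unfolding count_lds_one_line_rec[OF assms(1)] by simp
qed

lemma a213_eq_count_below: "1 \<le> n \<Longrightarrow> a213 n k = count_below lds_one_line n k"
  unfolding count_below_def lds_one_line_def by (rule a213_eq_card)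

lemma a213_rec:
  assumes "2 \<le> n" "4 \<le> k"
  shows "a213 n k = (\<Sum>i = 1..n-1. a213 i k * a213 (n - i) (k - 1))"
proof -
  have "a213 n k = (\<Sum>m = 1..n-1. count_below lds_one_line (n - m) k * count_below lds_rotated m (k - 1))"
    using assms a213_eq_count_below count_lds_one_line_rec by simp
  also have "\<dots> = (\<Sum>m = 1..n-1. count_below lds_one_line (n - m) k * count_below lds_one_line m (k - 1))"
    using assms count_lds_one_line_eq_count_lds_rotated by (intro sum.cong) auto
  also have "\<dots> = (\<Sum>i = 1..n-1. count_below lds_one_line i k * count_below lds_one_line (n - i) (k - 1))"
    by (rule sum_reflect)
  also have "\<dots> = (\<Sum>i = 1..n-1. a213 i k * a213 (n - i) (k - 1))"
    by (intro sum.cong) (auto simp: a213_eq_count_below)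
  finally show ?thesis .
qed

lemma a213_1: "a213 1 k = (if 1 < k then 1 else 0)"
  using a213_eq_count_below[of 1] count_below_1 lds_statistics_singleton by simp

theorem theorem2p1:
  shows "(\<forall>n k. 2 \<le> n \<and> 4 \<le> k \<longrightarrow>
            a213 n k = (\<Sum>i = 1..n-1. a213 i k * a213 (n - i) (k - 1)))
         \<and> a213 1 1 = 0
         \<and> (\<forall>k. 2 \<le> k \<longrightarrow> a213 1 k = 1)
         \<and> (\<forall>n. 2 \<le> n \<longrightarrow> a213 n 1 = 0 \<and> a213 n 2 = 0)
         \<and> (\<forall>n. 2 \<le> n \<longrightarrow> a213 n 3 = 2 ^ (n - 2))"
proof (intro conjI allI impI)
  fix n k :: nat
  assume "2 \<le> n \<and> 4 \<le> k"
  then show "a213 n k = (\<Sum>i = 1..n-1. a213 i k * a213 (n - i) (k - 1))" by (simp add: a213_rec)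
next
  show "a213 1 1 = 0" using a213_1[of 1] by simp
next
  fix k :: nat
  assume "2 \<le> k"
  then show "a213 1 k = 1" using a213_1[of k] by simp
next
  fix n :: nat
  assume "2 \<le> n"
  then show "a213 n 1 = 0" "a213 n 2 = 0" and "a213 n 3 = 2 ^ (n - 2)"
    by (simp_all add: a213_eq_count_below count_lds_one_line_le_2 count_lds_one_line_3)
qed

end
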